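(* The Hopf monoid of hypergraphs $\mathbf{k}\mathbf{HG}$ is free commutative, free cocommutative, and self-dual.
   Context: $\mathbf{k}$ is a field of characteristic $0$. A hypergraph on a finite vertex set $I$ is $\mathcal{G}=(I,E)$ with $E$ a set of subsets of $I$ of size at least $2$. $\mathbf{k}\mathbf{HG}[I]$ is the vector space with basis the hypergraphs on $I$; relabelling acts by bijections of vertices. Multiplication: $m_{S,T}(\mathcal{G}_1,\mathcal{G}_2)=(S\sqcup T,E(\mathcal{G}_1)\cup E(\mathcal{G}_2))$; comultiplication $\Delta_{S,T}(\mathcal{G})=\mathcal{G}|S\otimes\mathcal{G}|T$ with $\mathcal{G}|S=(S,\{U\in E(\mathcal{G}):U\subseteq S\})$. For a set species $\mathbf{q}$ with $\mathbf{q}[\emptyset]=\emptyset$, $\mathcal{S}(\mathbf{q})[I]$ has basis the pairs $(A,\{x_i\})$ with $A$ an unordered set partition of $I$ into nonempty blocks $A_i$ and $x_i\in\mathbf{q}[A_i]$; the free commutative monoid structure is union of such data; the free cocommutative comonoid structure sends $(A,\{x_i\})$ to $(A|_S,\{x_i\}_{A_i\subseteq S})\otimes(A|_T,\{x_i\}_{A_i\subseteq T})$ if $S$ is a union of blocks of $A$, and to $0$ otherwise. A vector space monoid (resp. comonoid) is free commutative (resp. free cocommutative) if it is isomorphic as a monoid (resp. comonoid) to some $\mathcal{S}(\mathbf{q})$. A vector space Hopf monoid is self-dual if there is an isomorphism of species from it to its linear dual (components $\mathbf{k}\mathbf{HG}[I]^*$, with dual operations $\Delta^*$ as product and $m^*$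 as coproduct) that is simultaneously a monoid and a comonoid isomorphism. *)

theory Defs
  imports Main "HOL-Library.Disjoint_Sets"
begin

text \<open>
  Species are evaluated on finite subsets I of nat (a skeleton of the
  category of finite sets and bijections).  A linear species with a chosen basis is
  given by a basis set  B I  for each finite I; vectors of the component at I are the
  functions  'b \<Rightarrow> 'k  supported in  B I  (all bases here are finite).  The tensor
  product of two components is represented by functions on pairs of basis elements.
\<close>

definition vecs :: "(nat set \<Rightarrow> 'b set) \<Rightarrow> nat set \<Rightarrow> ('b \<Rightarrow> 'k::zero) set" where
  "vecs B I = {f. \<forall>b. f b \<noteq> 0 \<longrightarrow> b \<in> B I}"

definition delta :: "'b \<Rightarrow> 'b \<Rightarrow> 'k::{zero,one}" where
  "delta b = (\<lambda>x. if x = b then 1 else 0)"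

definition lin_relabel ::
  "(nat set \<Rightarrow> 'b set) \<Rightarrow> ((nat \<Rightarrow> nat) \<Rightarrow> 'b \<Rightarrow> 'b) \<Rightarrow> (nat \<Rightarrow> nat) \<Rightarrow> nat set
     \<Rightarrow> ('b \<Rightarrow> 'k::comm_ring_1) \<Rightarrow> ('b \<Rightarrow> 'k)" where
  "lin_relabel B rl \<sigma> I f = (\<lambda>c. \<Sum>b\<in>B I. if rl \<sigma> b = c then f b else 0)"

definition lin_mult ::
  "(nat set \<Rightarrow> 'b set) \<Rightarrow> ('b \<Rightarrow> 'b \<Rightarrow> 'b) \<Rightarrow> nat set \<Rightarrow> nat set
     \<Rightarrow> ('b \<Rightarrow> 'k::comm_ring_1) \<Rightarrow> ('b \<Rightarrow> 'k) \<Rightarrow> ('b \<Rightarrow> 'k)" where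
  "lin_mult B mb S T f g =
     (\<lambda>c. \<Sum>b1\<in>B S. \<Sum>b2\<in>B T. if mb b1 b2 = c then f b1 * g b2 else 0)"

text \<open>Linear extension of a coproduct sending a basis element either to a pure tensor
  of basis elements (Some) or to 0 (None), Delta_{S,T}.\<close>
definition lin_comult ::
  "(nat set \<Rightarrow> 'b set) \<Rightarrow> (nat set \<Rightarrow> nat set \<Rightarrow> 'b \<Rightarrow> ('b \<times> 'b) option) \<Rightarrow> nat set \<Rightarrow> nat set
     \<Rightarrow> ('b \<Rightarrow> 'k::comm_ring_1) \<Rightarrow> ('b \<times> 'b \<Rightarrow> 'k)" where
  "lin_comult B db S T h =
     (\<lambda>p. \<Sum>b\<in>B (S \<union> T). if db S T b = Some p then h b else 0)"

text \<open>Linear dual, in coordinates w.r.t. the dual basis: the product is the transpose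
  of the coproduct and the coproduct is the transpose of the product.\<close>
definition dual_mult ::
  "(nat set \<Rightarrow> 'b set) \<Rightarrow> (nat set \<Rightarrow> nat set \<Rightarrow> ('b \<Rightarrow> 'k) \<Rightarrow> ('b \<times> 'b \<Rightarrow> 'k))
     \<Rightarrow> nat set \<Rightarrow> nat set \<Rightarrow> ('b \<Rightarrow> 'k::comm_ring_1) \<Rightarrow> ('b \<Rightarrow> 'k) \<Rightarrow> ('b \<Rightarrow> 'k)" where
  "dual_mult B cm S T \<phi> \<psi> =
     (\<lambda>b. \<Sum>b1\<in>B S. \<Sum>b2\<in>B T. \<phi> b1 * \<psi> b2 * cm S T (delta b) (b1, b2))"

definition dual_comult ::
  "(nat set \<Rightarrow> 'b set) \<Rightarrow> (nat set \<Rightarrow> nat set \<Rightarrow> ('b \<Rightarrow> 'k) \<Rightarrow> ('b \<Rightarrow> 'k) \<Rightarrow> ('b \<Rightarrow> 'k))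
     \<Rightarrow> nat set \<Rightarrow> nat set \<Rightarrow> ('b \<Rightarrow> 'k::comm_ring_1) \<Rightarrow> ('b \<times> 'b \<Rightarrow> 'k)" where
  "dual_comult B m S T \<phi> =
     (\<lambda>(b1, b2). \<Sum>b\<in>B (S \<union> T). \<phi> b * m S T (delta b1) (delta b2) b)"

definition tensor_map ::
  "(nat set \<Rightarrow> 'b set) \<Rightarrow> nat set \<Rightarrow> nat set \<Rightarrow> (('b \<Rightarrow> 'k) \<Rightarrow> ('c \<Rightarrow> 'k))
     \<Rightarrow> (('b \<Rightarrow> 'k) \<Rightarrow> ('c \<Rightarrow> 'k)) \<Rightarrow> ('b \<times> 'b \<Rightarrow> 'k::comm_ring_1) \<Rightarrow> ('c \<times> 'c \<Rightarrow> 'k)" where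
  "tensor_map B S T f g F =
     (\<lambda>(c1, c2). \<Sum>b1\<in>B S. \<Sum>b2\<in>B T. F (b1, b2) * f (delta b1) c1 * g (delta b2) c2)"

definition species_iso ::
  "(nat set \<Rightarrow> 'b set) \<Rightarrow> ((nat \<Rightarrow> nat) \<Rightarrow> 'b \<Rightarrow> 'b) \<Rightarrow>
   (nat set \<Rightarrow> 'c set) \<Rightarrow> ((nat \<Rightarrow> nat) \<Rightarrow> 'c \<Rightarrow> 'c) \<Rightarrow>
   (nat set \<Rightarrow> ('b \<Rightarrow> 'k::field) \<Rightarrow> ('c \<Rightarrow> 'k)) \<Rightarrow> bool" where
  "species_iso B1 rl1 B2 rl2 \<Phi> \<longleftrightarrow>
     (\<forall>I. finite I \<longrightarrow>
        bij_betw (\<Phi> I) (vecs B1 I) (vecs B2 I) \<and>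
        (\<forall>f\<in>vecs B1 I. \<forall>g\<in>vecs B1 I. \<forall>a. \<Phi> I (\<lambda>b. a * f b + g b) = (\<lambda>c. a * \<Phi> I f c + \<Phi> I g c))) \<and>
     (\<forall>I J \<sigma>. finite I \<and> bij_betw \<sigma> I J \<longrightarrow>
        (\<forall>f\<in>vecs B1 I. \<Phi> J (lin_relabel B1 rl1 \<sigma> I f) = lin_relabel B2 rl2 \<sigma> I (\<Phi> I f)))"

definition monoid_compat ::
  "(nat set \<Rightarrow> 'b set) \<Rightarrow> (nat set \<Rightarrow> nat set \<Rightarrow> ('b \<Rightarrow> 'k) \<Rightarrow> ('b \<Rightarrow> 'k) \<Rightarrow> ('b \<Rightarrow> 'k)) \<Rightarrow>
   (nat set \<Rightarrow> nat set \<Rightarrow> ('c \<Rightarrow> 'k) \<Rightarrow> ('c \<Rightarrow> 'k) \<Rightarrow> ('c \<Rightarrow> 'k)) \<Rightarrow>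
   (nat set \<Rightarrow> ('b \<Rightarrow> 'k::field) \<Rightarrow> ('c \<Rightarrow> 'k)) \<Rightarrow> bool" where
  "monoid_compat B1 m1 m2 \<Phi> \<longleftrightarrow>
     (\<forall>S T. finite S \<and> finite T \<and> S \<inter> T = {} \<longrightarrow>
        (\<forall>f\<in>vecs B1 S. \<forall>g\<in>vecs B1 T. \<Phi> (S \<union> T) (m1 S T f g) = m2 S T (\<Phi> S f) (\<Phi> T g)))"

definition comonoid_compat ::
  "(nat set \<Rightarrow> 'b set) \<Rightarrow> (nat set \<Rightarrow> nat set \<Rightarrow> ('b \<Rightarrow> 'k) \<Rightarrow> ('b \<times> 'b \<Rightarrow> 'k)) \<Rightarrow>
   (nat set \<Rightarrow> nat set \<Rightarrow> ('c \<Rightarrow> 'k) \<Rightarrow> ('c \<times> 'c \<Rightarrow> 'k)) \<Rightarrow>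
   (nat set \<Rightarrow> ('b \<Rightarrow> 'k::field) \<Rightarrow> ('c \<Rightarrow> 'k)) \<Rightarrow> bool" where
  "comonoid_compat B1 d1 d2 \<Phi> \<longleftrightarrow>
     (\<forall>S T. finite S \<and> finite T \<and> S \<inter> T = {} \<longrightarrow>
        (\<forall>h\<in>vecs B1 (S \<union> T).
           d2 S T (\<Phi> (S \<union> T) h) = tensor_map B1 S T (\<Phi> S) (\<Phi> T) (d1 S T h)))"

text \<open>A hypergraph on I is identified with its edge set E (the vertex set being I).\<close>
definition hg :: "nat set \<Rightarrow> nat set set set" where
  "hg I = {E. \<forall>U\<in>E. U \<subseteq> I \<and> 2 \<le> card U}"

definition hg_restrict :: "nat set set \<Rightarrow> nat set \<Rightarrow> nat set set" where
  "hg_restrict E S = {U\<in>E. U \<subseteq> S}"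

definition hg_relabel :: "(nat \<Rightarrow> nat) \<Rightarrow> nat set set \<Rightarrow> nat set set" where
  "hg_relabel \<sigma> E = (\<lambda>U. \<sigma> ` U) ` E"

definition hg_mult :: "nat set \<Rightarrow> nat set \<Rightarrow> (nat set set \<Rightarrow> 'k) \<Rightarrow> (nat set set \<Rightarrow> 'k)
     \<Rightarrow> (nat set set \<Rightarrow> 'k::comm_ring_1)" where
  "hg_mult = lin_mult hg (\<union>)"

definition hg_comult :: "nat set \<Rightarrow> nat set \<Rightarrow> (nat set set \<Rightarrow> 'k)
     \<Rightarrow> (nat set set \<times> nat set set \<Rightarrow> 'k::comm_ring_1)" where
  "hg_comult = lin_comult hg (\<lambda>S T E. Some (hg_restrict E S, hg_restrict E T))"

definition set_species :: "(nat set \<Rightarrow> 'x set) \<Rightarrow> ((nat \<Rightarrow> nat) \<Rightarrow> nat set \<Rightarrow> 'x \<Rightarrow> 'x) \<Rightarrow> bool" where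
  "set_species qset qmap \<longleftrightarrow>
     (\<forall>A B \<sigma>. finite A \<and> bij_betw \<sigma> A B \<longrightarrow> qmap \<sigma> A ` qset A \<subseteq> qset B) \<and>
     (\<forall>A. finite A \<longrightarrow> (\<forall>x\<in>qset A. qmap id A x = x)) \<and>
     (\<forall>A B C \<sigma> \<tau>. finite A \<and> bij_betw \<sigma> A B \<and> bij_betw \<tau> B C \<longrightarrow>
        (\<forall>x\<in>qset A. qmap (\<tau> \<circ> \<sigma>) A x = qmap \<tau> B (qmap \<sigma> A x))) \<and>
     (\<forall>A \<sigma> \<tau>. finite A \<and> inj_on \<sigma> A \<and> (\<forall>a\<in>A. \<sigma> a = \<tau> a) \<longrightarrow>
        (\<forall>x\<in>qset A. qmap \<sigma> A x = qmap \<tau> A x))"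

definition sq_basis :: "(nat set \<Rightarrow> 'x set) \<Rightarrow> nat set \<Rightarrow> (nat set \<times> 'x) set set" where
  "sq_basis qset I = {X. partition_on I (fst ` X) \<and>
      (\<forall>p\<in>X. \<forall>p'\<in>X. fst p = fst p' \<longrightarrow> p = p') \<and> (\<forall>(A, x)\<in>X. x \<in> qset A)}"

definition sq_relabel :: "((nat \<Rightarrow> nat) \<Rightarrow> nat set \<Rightarrow> 'x \<Rightarrow> 'x) \<Rightarrow> (nat \<Rightarrow> nat)
     \<Rightarrow> (nat set \<times> 'x) set \<Rightarrow> (nat set \<times> 'x) set" where
  "sq_relabel qmap \<sigma> X = (\<lambda>(A, x). (\<sigma> ` A, qmap \<sigma> A x)) ` X"

definition sq_mult :: "(nat set \<Rightarrow> 'x set) \<Rightarrow> nat set \<Rightarrow> nat set \<Rightarrow> ((nat set \<times> 'x) set \<Rightarrow> 'k)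
     \<Rightarrow> ((nat set \<times> 'x) set \<Rightarrow> 'k) \<Rightarrow> ((nat set \<times> 'x) set \<Rightarrow> 'k::comm_ring_1)" where
  "sq_mult qset = lin_mult (sq_basis qset) (\<union>)"

definition sq_comult :: "(nat set \<Rightarrow> 'x set) \<Rightarrow> nat set \<Rightarrow> nat set \<Rightarrow> ((nat set \<times> 'x) set \<Rightarrow> 'k)
     \<Rightarrow> ((nat set \<times> 'x) set \<times> (nat set \<times> 'x) set \<Rightarrow> 'k::comm_ring_1)" where
  "sq_comult qset = lin_comult (sq_basis qset)
     (\<lambda>S T X. if S = \<Union> {A\<in>fst ` X. A \<subseteq> S}
              then Some ({p\<in>X. fst p \<subseteq> S}, {p\<in>X. fst p \<subseteq> T}) else None)"

definition hg_free_commutative :: "'k::field itself \<Rightarrow> bool" where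
  "hg_free_commutative _ \<longleftrightarrow>
     (\<exists>(qset :: nat set \<Rightarrow> nat set) qmap (\<Phi> :: nat set \<Rightarrow> (nat set set \<Rightarrow> 'k) \<Rightarrow> _).
        set_species qset qmap \<and> qset {} = {} \<and>
        species_iso hg hg_relabel (sq_basis qset) (sq_relabel qmap) \<Phi> \<and>
        monoid_compat hg hg_mult (sq_mult qset) \<Phi>)"

definition hg_free_cocommutative :: "'k::field itself \<Rightarrow> bool" where
  "hg_free_cocommutative _ \<longleftrightarrow>
     (\<exists>(qset :: nat set \<Rightarrow> nat set) qmap (\<Phi> :: nat set \<Rightarrow> (nat set set \<Rightarrow> 'k) \<Rightarrow> _).
        set_species qset qmap \<and> qset {} = {} \<and>
        species_iso hg hg_relabel (sq_basis qset) (sq_relabel qmap) \<Phi> \<and>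
        comonoid_compat hg hg_comult (sq_comult qset) \<Phi>)"

definition hg_self_dual :: "'k::field itself \<Rightarrow> bool" where
  "hg_self_dual _ \<longleftrightarrow>
     (\<exists>\<Phi> :: nat set \<Rightarrow> (nat set set \<Rightarrow> 'k) \<Rightarrow> (nat set set \<Rightarrow> 'k).
        species_iso hg hg_relabel hg hg_relabel \<Phi> \<and>
        monoid_compat hg hg_mult (dual_mult hg hg_comult) \<Phi> \<and>
        comonoid_compat hg hg_comult (dual_comult hg hg_mult) \<Phi>)"

end

theory Submission
  imports Defs "HOL-Library.Nat_Bijection"
begin

(* Every hypergraph is, uniquely, the union of its restrictions to its connected components,
   and this decomposition is compatible with the union product; so the basis of kHG is that of
   S(q) for q the species of connected hypergraphs, and kHG is free commutative.

   Sending a hypergraph b to the sum of the dual basis vectors of all hypergraphs that share no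
   edge with b is invertible by an inclusion-exclusion sign sum over edge sets, and since
   disjointness from c splits along the restrictions of c, it is an isomorphism of Hopf monoids
   onto the dual.  Composing it with the dual of the component decomposition, which turns the
   union product into the splitting coproduct of S(q), shows that kHG is also free
   cocommutative. *)

section \<open>Linear maps given on bases\<close>

lemma vecs_zero: "f \<in> vecs B I \<Longrightarrow> b \<notin> B I \<Longrightarrow> f b = 0"
  unfolding vecs_def by auto

lemma vecsI: "(\<And>b. b \<notin> B I \<Longrightarrow> f b = 0) \<Longrightarrow> f \<in> vecs B I"
  unfolding vecs_def by auto

lemma sum_if_eq_bij_betw:
  assumes A: "finite A" and g: "bij_betw g A C"
  shows "(\<Sum>b\<in>A. if g b = c then f b else (0::'k::comm_monoid_add))
         = (if c \<in> C then f (inv_into A g c) else 0)"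
proof (cases "c \<in> C")
  case True
  let ?b = "inv_into A g c"
  have b: "?b \<in> A" "g ?b = c"
    using True g by (auto simp: bij_betw_def intro: inv_into_into f_inv_into_f)
  have "g b = c \<longleftrightarrow> b = ?b" if "b \<in> A" for b
    using that b g by (auto simp: bij_betw_def inj_on_def)
  then have "(\<Sum>b\<in>A. if g b = c then f b else 0) = (\<Sum>b\<in>A. if b = ?b then f b else 0)"
    by (intro sum.cong) auto
  then show ?thesis using A b True by (simp add: sum.delta)
next
  case False
  then have "g b \<noteq> c" if "b \<in> A" for b using that g by (auto simp: bij_betw_def)
  then show ?thesis using False by simp
qed

lemma sum_if_eq_comp:
  assumes "finite A" "finite C" "\<And>b. b \<in> A \<Longrightarrow> \<beta> b \<in> C"
  shows "(\<Sum>x\<in>C. if \<gamma> x = c then (\<Sum>b\<in>A. if \<beta> b = x then f b else 0) else (0::'k::comm_monoid_add))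
       = (\<Sum>b\<in>A. if \<gamma> (\<beta> b) = c then f b else 0)"
proof -
  have "(\<Sum>x\<in>C. if \<gamma> x = c then (\<Sum>b\<in>A. if \<beta> b = x then f b else 0) else 0)
      = (\<Sum>x\<in>C. \<Sum>b\<in>A. if \<beta> b = x then (if \<gamma> x = c then f b else 0) else 0)"
    by (rule sum.cong) (auto intro!: sum.cong sum.neutral)
  also have "\<dots> = (\<Sum>b\<in>A. \<Sum>x\<in>C. if \<beta> b = x then (if \<gamma> x = c then f b else 0) else 0)"
    by (rule sum.swap)
  also have "\<dots> = (\<Sum>b\<in>A. if \<gamma> (\<beta> b) = c then f b else 0)"
    using assms by (intro sum.cong) (simp_all add: sum.delta)
  finally show ?thesis .
qed

definition lin_basis_map :: "(nat set \<Rightarrow> 'b set) \<Rightarrow> (nat set \<Rightarrow> 'b \<Rightarrow> 'c) \<Rightarrow> nat set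
    \<Rightarrow> ('b \<Rightarrow> 'k::comm_ring_1) \<Rightarrow> ('c \<Rightarrow> 'k)" where
  "lin_basis_map B \<beta> I f = (\<lambda>c. \<Sum>b\<in>B I. if \<beta> I b = c then f b else 0)"

lemma lin_basis_map_bij_betw:
  assumes "finite (B I)" "bij_betw (\<beta> I) (B I) C"
  shows "lin_basis_map B \<beta> I f c = (if c \<in> C then f (inv_into (B I) (\<beta> I) c) else 0)"
  unfolding lin_basis_map_def by (rule sum_if_eq_bij_betw[OF assms])

lemma lin_basis_map_linear:
  fixes f g :: "'b \<Rightarrow> 'k::comm_ring_1"
  shows "lin_basis_map B \<beta> I (\<lambda>b. a * f b + g b)
       = (\<lambda>c. a * lin_basis_map B \<beta> I f c + lin_basis_map B \<beta> I g c)"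
proof
  fix c
  have "lin_basis_map B \<beta> I (\<lambda>b. a * f b + g b) c
      = (\<Sum>b\<in>B I. a * (if \<beta> I b = c then f b else 0) + (if \<beta> I b = c then g b else 0))"
    unfolding lin_basis_map_def by (rule sum.cong) auto
  then show "lin_basis_map B \<beta> I (\<lambda>b. a * f b + g b) c
           = a * lin_basis_map B \<beta> I f c + lin_basis_map B \<beta> I g c"
    by (simp add: lin_basis_map_def sum.distrib sum_distrib_left)
qed

lemma bij_betw_lin_basis_map:
  fixes B1 :: "nat set \<Rightarrow> 'b set" and B2 :: "nat set \<Rightarrow> 'c set"
  assumes fin: "finite (B1 I)" and bij: "bij_betw (\<beta> I) (B1 I) (B2 I)"
  shows "bij_betw (lin_basis_map B1 \<beta> I) (vecs B1 I) (vecs B2 I :: ('c \<Rightarrow> 'k::comm_ring_1) set)"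
proof -
  note map_eq = lin_basis_map_bij_betw[where B=B1 and \<beta>=\<beta> and C="B2 I" and I=I, OF fin bij]
  have \<beta>_inv: "inv_into (B1 I) (\<beta> I) (\<beta> I b) = b" if "b \<in> B1 I" for b
    using bij that by (simp add: bij_betw_inv_into_left)
  have \<beta>_inv': "inv_into (B1 I) (\<beta> I) c \<in> B1 I" "\<beta> I (inv_into (B1 I) (\<beta> I) c) = c"
    if "c \<in> B2 I" for c
    using bij that by (auto simp: bij_betw_def intro: inv_into_into f_inv_into_f)
  have \<beta>_in: "\<beta> I b \<in> B2 I" if "b \<in> B1 I" for b
    using bij that by (auto simp: bij_betw_def)
  let ?inv = "\<lambda>(g :: 'c \<Rightarrow> 'k) b. if b \<in> B1 I then g (\<beta> I b) else 0"
  show ?thesis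
  proof (rule bij_betw_byWitness[where f'="?inv"])
    show "\<forall>f\<in>vecs B1 I. ?inv (lin_basis_map B1 \<beta> I f) = f"
      by (auto simp: map_eq \<beta>_inv \<beta>_in vecs_zero)
    show "\<forall>g\<in>vecs B2 I. lin_basis_map B1 \<beta> I (?inv g) = g"
      by (auto simp: map_eq \<beta>_inv' vecs_zero)
    show "lin_basis_map B1 \<beta> I ` vecs B1 I \<subseteq> vecs B2 I"
      by (intro image_subsetI vecsI) (simp add: map_eq)
    show "?inv ` vecs B2 I \<subseteq> vecs B1 I"
      by (auto intro!: vecsI)
  qed
qed

lemma lin_basis_map_natural:
  assumes fin: "finite (B1 I)" "finite (B1 J)" "finite (B2 I)"
    and \<beta>_in: "\<And>b. b \<in> B1 I \<Longrightarrow> \<beta> I b \<in> B2 I"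
    and rl1: "\<And>b. b \<in> B1 I \<Longrightarrow> rl1 \<sigma> b \<in> B1 J"
    and natural: "\<And>b. b \<in> B1 I \<Longrightarrow> \<beta> J (rl1 \<sigma> b) = rl2 \<sigma> (\<beta> I b)"
  shows "lin_basis_map B1 \<beta> J (lin_relabel B1 rl1 \<sigma> I f)
       = lin_relabel B2 rl2 \<sigma> I (lin_basis_map B1 \<beta> I f)"
proof
  fix c
  have "lin_basis_map B1 \<beta> J (lin_relabel B1 rl1 \<sigma> I f) c
      = (\<Sum>b\<in>B1 I. if \<beta> J (rl1 \<sigma> b) = c then f b else 0)"
    unfolding lin_basis_map_def lin_relabel_def by (rule sum_if_eq_comp) (use fin rl1 in auto)
  also have "\<dots> = (\<Sum>b\<in>B1 I. if rl2 \<sigma> (\<beta> I b) = c then f b else 0)"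
    by (rule sum.cong) (auto simp: natural)
  also have "\<dots> = lin_relabel B2 rl2 \<sigma> I (lin_basis_map B1 \<beta> I f) c"
    unfolding lin_basis_map_def lin_relabel_def
    by (rule sum_if_eq_comp[symmetric]) (use fin \<beta>_in in auto)
  finally show "lin_basis_map B1 \<beta> J (lin_relabel B1 rl1 \<sigma> I f) c
              = lin_relabel B2 rl2 \<sigma> I (lin_basis_map B1 \<beta> I f) c" .
qed

lemma species_iso_lin_basis_map:
  fixes B1 :: "nat set \<Rightarrow> 'b set" and B2 :: "nat set \<Rightarrow> 'c set"
  assumes fin: "\<And>I. finite I \<Longrightarrow> finite (B1 I)"
    and bij: "\<And>I. finite I \<Longrightarrow> bij_betw (\<beta> I) (B1 I) (B2 I)"
    and rl1: "\<And>I J \<sigma> b. finite I \<Longrightarrow> bij_betw \<sigma> I J \<Longrightarrow> b \<in> B1 I \<Longrightarrow> rl1 \<sigma> b \<in> B1 J"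
    and natural: "\<And>I J \<sigma> b. finite I \<Longrightarrow> bij_betw \<sigma> I J \<Longrightarrow> b \<in> B1 I \<Longrightarrow>
                   \<beta> J (rl1 \<sigma> b) = rl2 \<sigma> (\<beta> I b)"
  shows "species_iso B1 rl1 B2 rl2 (lin_basis_map B1 \<beta> :: _ \<Rightarrow> _ \<Rightarrow> _ \<Rightarrow> 'k::field)"
  unfolding species_iso_def
proof (intro conjI allI impI ballI)
  fix I :: "nat set" assume "finite I"
  then show "bij_betw (lin_basis_map B1 \<beta> I) (vecs B1 I) (vecs B2 I :: ('c \<Rightarrow> 'k) set)"
    by (intro bij_betw_lin_basis_map fin bij)
next
  fix I :: "nat set" and f g :: "'b \<Rightarrow> 'k" and a :: 'k
  show "lin_basis_map B1 \<beta> I (\<lambda>b. a * f b + g b)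
      = (\<lambda>c. a * lin_basis_map B1 \<beta> I f c + lin_basis_map B1 \<beta> I g c)"
    by (rule lin_basis_map_linear)
next
  fix I J :: "nat set" and \<sigma> :: "nat \<Rightarrow> nat" and f :: "'b \<Rightarrow> 'k"
  assume "finite I \<and> bij_betw \<sigma> I J"
  then have I: "finite I" and \<sigma>: "bij_betw \<sigma> I J" by auto
  have J: "finite J" using I \<sigma> bij_betw_finite by blast
  show "lin_basis_map B1 \<beta> J (lin_relabel B1 rl1 \<sigma> I f)
      = lin_relabel B2 rl2 \<sigma> I (lin_basis_map B1 \<beta> I f)"
  proof (rule lin_basis_map_natural)
    show "finite (B2 I)" using bij[OF I] fin[OF I] bij_betw_finite by blast
    show "\<beta> I b \<in> B2 I" if "b \<in> B1 I" for b using bij[OF I] that by (auto simp: bij_betw_def)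
  qed (use fin I J rl1[OF I \<sigma>] natural[OF I \<sigma>] in auto)
qed

lemma species_iso_bij_betw:
  "species_iso B1 rl1 B2 rl2 \<Phi> \<Longrightarrow> finite I \<Longrightarrow> bij_betw (\<Phi> I) (vecs B1 I) (vecs B2 I)"
  by (simp add: species_iso_def)

lemma species_iso_linear:
  "species_iso B1 rl1 B2 rl2 \<Phi> \<Longrightarrow> finite I \<Longrightarrow> f \<in> vecs B1 I \<Longrightarrow> g \<in> vecs B1 I \<Longrightarrow>
   \<Phi> I (\<lambda>b. a * f b + g b) = (\<lambda>c. a * \<Phi> I f c + \<Phi> I g c)"
  by (simp add: species_iso_def)

lemma species_iso_natural:
  "species_iso B1 rl1 B2 rl2 \<Phi> \<Longrightarrow> finite I \<Longrightarrow> bij_betw \<sigma> I J \<Longrightarrow> f \<in> vecs B1 I \<Longrightarrow>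
   \<Phi> J (lin_relabel B1 rl1 \<sigma> I f) = lin_relabel B2 rl2 \<sigma> I (\<Phi> I f)"
  by (simp add: species_iso_def)

lemma species_iso_comp:
  fixes \<Phi> :: "nat set \<Rightarrow> ('b \<Rightarrow> 'k::field) \<Rightarrow> ('c \<Rightarrow> 'k)"
    and \<Psi> :: "nat set \<Rightarrow> ('c \<Rightarrow> 'k) \<Rightarrow> ('d \<Rightarrow> 'k)"
  assumes \<Phi>: "species_iso B1 rl1 B2 rl2 \<Phi>" and \<Psi>: "species_iso B2 rl2 B3 rl3 \<Psi>"
  shows "species_iso B1 rl1 B3 rl3 (\<lambda>I f. \<Psi> I (\<Phi> I f))"
  unfolding species_iso_def
proof (intro conjI allI impI ballI)
  fix I :: "nat set" assume I: "finite I"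
  have \<Phi>I: "bij_betw (\<Phi> I) (vecs B1 I) (vecs B2 I)" by (rule species_iso_bij_betw[OF \<Phi> I])
  have "bij_betw (\<Psi> I \<circ> \<Phi> I) (vecs B1 I) (vecs B3 I)"
    using \<Phi>I species_iso_bij_betw[OF \<Psi> I] by (rule bij_betw_trans)
  then show "bij_betw (\<lambda>f. \<Psi> I (\<Phi> I f)) (vecs B1 I) (vecs B3 I)" by (simp add: comp_def)
  fix f g :: "'b \<Rightarrow> 'k" and a :: 'k
  assume f: "f \<in> vecs B1 I" and g: "g \<in> vecs B1 I"
  have "\<Phi> I f \<in> vecs B2 I" "\<Phi> I g \<in> vecs B2 I" using \<Phi>I f g by (auto simp: bij_betw_def)
  then show "\<Psi> I (\<Phi> I (\<lambda>b. a * f b + g b)) = (\<lambda>c. a * \<Psi> I (\<Phi> I f) c + \<Psi> I (\<Phi> I g) c)"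
    unfolding species_iso_linear[OF \<Phi> I f g] by (rule species_iso_linear[OF \<Psi> I])
next
  fix I J :: "nat set" and \<sigma> :: "nat \<Rightarrow> nat" and f :: "'b \<Rightarrow> 'k"
  assume "finite I \<and> bij_betw \<sigma> I J" and f: "f \<in> vecs B1 I"
  then have I: "finite I" and \<sigma>: "bij_betw \<sigma> I J" by auto
  have "\<Phi> I f \<in> vecs B2 I" using species_iso_bij_betw[OF \<Phi> I] f by (auto simp: bij_betw_def)
  then show "\<Psi> J (\<Phi> J (lin_relabel B1 rl1 \<sigma> I f)) = lin_relabel B3 rl3 \<sigma> I (\<Psi> I (\<Phi> I f))"
    unfolding species_iso_natural[OF \<Phi> I \<sigma> f] by (rule species_iso_natural[OF \<Psi> I \<sigma>])
qed

lemma lin_mult_delta: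
  assumes "finite (B S)" "finite (B T)"
  shows "lin_mult B mb S T (delta b1) (delta b2) c
       = (if b1 \<in> B S \<and> b2 \<in> B T \<and> mb b1 b2 = c then 1 else (0::'k::comm_ring_1))"
proof -
  have "lin_mult B mb S T (delta b1) (delta b2) c
      = (\<Sum>x1\<in>B S. if x1 = b1 then (\<Sum>x2\<in>B T. if x2 = b2 then
           (if mb b1 b2 = c then 1 else (0::'k)) else 0) else 0)"
    unfolding lin_mult_def delta_def by (intro sum.cong refl) (auto intro!: sum.cong sum.neutral)
  then show ?thesis using assms by (simp add: sum.delta')
qed

lemma lin_comult_delta:
  assumes "finite (B (S \<union> T))"
  shows "lin_comult B db S T (delta b) p
       = (if b \<in> B (S \<union> T) \<and> db S T b = Some p then 1 else (0::'k::comm_ring_1))"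
proof -
  have "lin_comult B db S T (delta b) p
      = (\<Sum>x\<in>B (S \<union> T). if x = b then (if db S T b = Some p then 1 else (0::'k)) else 0)"
    unfolding lin_comult_def delta_def by (intro sum.cong refl) auto
  then show ?thesis using assms by (simp add: sum.delta')
qed

lemma lin_basis_map_lin_mult:
  fixes f g :: "'b \<Rightarrow> 'k::comm_ring_1"
  assumes fin: "finite (B1 S)" "finite (B1 T)" "finite (B1 (S \<union> T))" "finite (B2 S)" "finite (B2 T)"
    and \<beta>S: "\<And>b. b \<in> B1 S \<Longrightarrow> \<beta> S b \<in> B2 S" and \<beta>T: "\<And>b. b \<in> B1 T \<Longrightarrow> \<beta> T b \<in> B2 T"
    and closed: "\<And>b1 b2. b1 \<in> B1 S \<Longrightarrow> b2 \<in> B1 T \<Longrightarrow> mb1 b1 b2 \<in> B1 (S \<union> T)"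
    and hom: "\<And>b1 b2. b1 \<in> B1 S \<Longrightarrow> b2 \<in> B1 T \<Longrightarrow>
                \<beta> (S \<union> T) (mb1 b1 b2) = mb2 (\<beta> S b1) (\<beta> T b2)"
  shows "lin_basis_map B1 \<beta> (S \<union> T) (lin_mult B1 mb1 S T f g)
       = lin_mult B2 mb2 S T (lin_basis_map B1 \<beta> S f) (lin_basis_map B1 \<beta> T g)"
proof
  fix c
  let ?A = "B1 S \<times> B1 T"
  let ?F = "\<lambda>(b1, b2). f b1 * g b2"
  let ?m1 = "\<lambda>(b1, b2). mb1 b1 b2"
  let ?m2 = "\<lambda>(x1, x2). mb2 x1 x2"
  let ?\<beta> = "\<lambda>(b1, b2). (\<beta> S b1, \<beta> T b2)"
  have finA: "finite ?A" using fin by simp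
  have "lin_basis_map B1 \<beta> (S \<union> T) (lin_mult B1 mb1 S T f g) c
      = (\<Sum>x\<in>B1 (S \<union> T). if \<beta> (S \<union> T) x = c then
           (\<Sum>p\<in>?A. if ?m1 p = x then ?F p else 0) else 0)"
    unfolding lin_basis_map_def lin_mult_def
    by (rule sum.cong) (auto simp: sum.cartesian_product intro!: sum.cong split: prod.splits)
  also have "\<dots> = (\<Sum>p\<in>?A. if \<beta> (S \<union> T) (?m1 p) = c then ?F p else 0)"
    by (rule sum_if_eq_comp) (use finA fin closed in auto)
  also have "\<dots> = (\<Sum>p\<in>?A. if ?m2 (?\<beta> p) = c then ?F p else 0)"
    by (rule sum.cong) (auto simp: hom)
  also have "\<dots> = (\<Sum>x\<in>B2 S \<times> B2 T. if ?m2 x = c then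
                    (\<Sum>p\<in>?A. if ?\<beta> p = x then ?F p else 0) else 0)"
    by (rule sum_if_eq_comp[symmetric]) (use finA fin \<beta>S \<beta>T in auto)
  also have "\<dots> = lin_mult B2 mb2 S T (lin_basis_map B1 \<beta> S f) (lin_basis_map B1 \<beta> T g) c"
  proof -
    have "lin_basis_map B1 \<beta> S f x1 * lin_basis_map B1 \<beta> T g x2
        = (\<Sum>p\<in>?A. if ?\<beta> p = (x1, x2) then ?F p else 0)" for x1 x2
      unfolding lin_basis_map_def sum_product sum.cartesian_product
      by (rule sum.cong) (auto split: if_splits)
    then show ?thesis
      unfolding lin_mult_def sum.cartesian_product by (intro sum.cong) auto
  qed
  finally show "lin_basis_map B1 \<beta> (S \<union> T) (lin_mult B1 mb1 S T f g) c
      = lin_mult B2 mb2 S T (lin_basis_map B1 \<beta> S f) (lin_basis_map B1 \<beta> T g) c" .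
qed

lemma dual_comult_lin_mult:
  assumes "finite (B S)" "finite (B T)" "finite (B (S \<union> T))"
    and "b1 \<in> B S" "b2 \<in> B T" "mb b1 b2 \<in> B (S \<union> T)"
  shows "dual_comult B (lin_mult B mb) S T \<phi> (b1, b2) = (\<phi> (mb b1 b2) :: 'k::comm_ring_1)"
  using assms by (simp add: dual_comult_def lin_mult_delta if_distrib sum.delta' cong: if_cong)

definition basis_mult_iso ::
  "(nat set \<Rightarrow> 'b set) \<Rightarrow> ('b \<Rightarrow> 'b \<Rightarrow> 'b) \<Rightarrow> (nat set \<Rightarrow> 'c set) \<Rightarrow> ('c \<Rightarrow> 'c \<Rightarrow> 'c)
     \<Rightarrow> (nat set \<Rightarrow> 'b \<Rightarrow> 'c) \<Rightarrow> bool" where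
  "basis_mult_iso B mb C mc \<beta> \<longleftrightarrow>
     (\<forall>I. finite I \<longrightarrow> finite (B I) \<and> bij_betw (\<beta> I) (B I) (C I)) \<and>
     (\<forall>S T. finite S \<and> finite T \<and> S \<inter> T = {} \<longrightarrow>
        (\<forall>b1\<in>B S. \<forall>b2\<in>B T. mb b1 b2 \<in> B (S \<union> T) \<and>
           \<beta> (S \<union> T) (mb b1 b2) = mc (\<beta> S b1) (\<beta> T b2)))"

lemma basis_mult_isoD:
  assumes "basis_mult_iso B mb C mc \<beta>"
  shows "\<And>I. finite I \<Longrightarrow> finite (B I)"
    and "\<And>I. finite I \<Longrightarrow> bij_betw (\<beta> I) (B I) (C I)"
    and "\<And>I. finite I \<Longrightarrow> finite (C I)"
    and "\<And>S T b1 b2. finite S \<Longrightarrow> finite T \<Longrightarrow> S \<inter> T = {} \<Longrightarrow> b1 \<in> B S \<Longrightarrow> b2 \<in> B T \<Longrightarrow>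
           mb b1 b2 \<in> B (S \<union> T)"
    and "\<And>S T b1 b2. finite S \<Longrightarrow> finite T \<Longrightarrow> S \<inter> T = {} \<Longrightarrow> b1 \<in> B S \<Longrightarrow> b2 \<in> B T \<Longrightarrow>
           \<beta> (S \<union> T) (mb b1 b2) = mc (\<beta> S b1) (\<beta> T b2)"
  using assms unfolding basis_mult_iso_def by (auto intro: bij_betw_finite[THEN iffD1])

lemma monoid_compat_lin_basis_map:
  fixes B :: "nat set \<Rightarrow> 'b set"
  assumes "basis_mult_iso B mb C mc \<beta>"
  shows "monoid_compat B (lin_mult B mb) (lin_mult C mc) (lin_basis_map B \<beta> :: _ \<Rightarrow> _ \<Rightarrow> _ \<Rightarrow> 'k::field)"
  unfolding monoid_compat_def
proof (intro allI impI ballI)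
  fix S T :: "nat set" and f g :: "'b \<Rightarrow> 'k"
  assume "finite S \<and> finite T \<and> S \<inter> T = {}"
  then have S: "finite S" and T: "finite T" and ST: "S \<inter> T = {}" by auto
  note iso = basis_mult_isoD[OF assms]
  show "lin_basis_map B \<beta> (S \<union> T) (lin_mult B mb S T f g)
      = lin_mult C mc S T (lin_basis_map B \<beta> S f) (lin_basis_map B \<beta> T g)"
  proof (rule lin_basis_map_lin_mult)
    show "\<beta> S b \<in> C S" if "b \<in> B S" for b using iso(2)[OF S] that by (auto simp: bij_betw_def)
    show "\<beta> T b \<in> C T" if "b \<in> B T" for b using iso(2)[OF T] that by (auto simp: bij_betw_def)
  qed (use S T iso(1,3) iso(4,5)[OF S T ST] in auto)
qed

lemma tensor_map_lin_basis_map: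
  fixes F G :: "('b \<Rightarrow> 'k::comm_ring_1) \<Rightarrow> ('c \<Rightarrow> 'k)"
  assumes S: "finite (C S)" "bij_betw (\<beta> S) (C S) (D S)"
    and T: "finite (C T)" "bij_betw (\<beta> T) (C T) (D T)"
  shows "tensor_map B S T (\<lambda>f. lin_basis_map C \<beta> S (F f)) (\<lambda>f. lin_basis_map C \<beta> T (G f)) M (X1, X2)
       = (if X1 \<in> D S \<and> X2 \<in> D T
          then tensor_map B S T F G M (inv_into (C S) (\<beta> S) X1, inv_into (C T) (\<beta> T) X2) else 0)"
  unfolding tensor_map_def
  by (cases "X1 \<in> D S"; cases "X2 \<in> D T")
    (simp_all add: lin_basis_map_bij_betw[where B=C and \<beta>=\<beta> and C="D S" and I=S, OF S]
      lin_basis_map_bij_betw[where B=C and \<beta>=\<beta> and C="D T" and I=T, OF T])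

lemma lin_comult_lin_basis_map:
  fixes \<phi> :: "'b \<Rightarrow> 'k::field"
  assumes iso: "basis_mult_iso B mb C mc \<beta>"
    and S: "finite S" and T: "finite T" and ST: "S \<inter> T = {}"
    and split: "\<And>X X1 X2. X \<in> C (S \<union> T) \<Longrightarrow>
                  dc S T X = Some (X1, X2) \<longleftrightarrow> X1 \<in> C S \<and> X2 \<in> C T \<and> X = mc X1 X2"
  shows "lin_comult C dc S T (lin_basis_map B \<beta> (S \<union> T) \<phi>) (X1, X2)
       = (if X1 \<in> C S \<and> X2 \<in> C T then dual_comult B (lin_mult B mb) S T \<phi>
            (inv_into (B S) (\<beta> S) X1, inv_into (B T) (\<beta> T) X2) else 0)"
proof -
  note iso = basis_mult_isoD[OF iso]
  have U: "finite (S \<union> T)" using S T by simp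
  have L: "lin_comult C dc S T (lin_basis_map B \<beta> (S \<union> T) \<phi>) (X1, X2)
     = (\<Sum>X\<in>C (S \<union> T). if X1 \<in> C S \<and> X2 \<in> C T \<and> X = mc X1 X2
          then lin_basis_map B \<beta> (S \<union> T) \<phi> X else 0)"
    unfolding lin_comult_def by (rule sum.cong) (simp_all add: split)
  show ?thesis
  proof (cases "X1 \<in> C S \<and> X2 \<in> C T")
    case False
    then have "(\<Sum>X\<in>C (S \<union> T). if X1 \<in> C S \<and> X2 \<in> C T \<and> X = mc X1 X2
                 then lin_basis_map B \<beta> (S \<union> T) \<phi> X else 0) = 0"
      by (intro sum.neutral) auto
    then show ?thesis using False L by auto
  next
    case True
    let ?b1 = "inv_into (B S) (\<beta> S) X1" and ?b2 = "inv_into (B T) (\<beta> T) X2"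
    have b1: "?b1 \<in> B S" "\<beta> S ?b1 = X1"
      using True iso(2)[OF S] by (auto simp: bij_betw_def intro: inv_into_into f_inv_into_f)
    have b2: "?b2 \<in> B T" "\<beta> T ?b2 = X2"
      using True iso(2)[OF T] by (auto simp: bij_betw_def intro: inv_into_into f_inv_into_f)
    have b12: "mb ?b1 ?b2 \<in> B (S \<union> T)" by (rule iso(4)[OF S T ST b1(1) b2(1)])
    have \<beta>12: "\<beta> (S \<union> T) (mb ?b1 ?b2) = mc X1 X2" using iso(5)[OF S T ST b1(1) b2(1)] b1 b2 by simp
    have X12: "mc X1 X2 \<in> C (S \<union> T)"
      using \<beta>12 b12 iso(2)[OF U] by (metis bij_betwE)
    have "lin_comult C dc S T (lin_basis_map B \<beta> (S \<union> T) \<phi>) (X1, X2)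
        = lin_basis_map B \<beta> (S \<union> T) \<phi> (mc X1 X2)"
      unfolding L using True X12 iso(3)[OF U] by (simp add: sum.delta')
    also have "\<dots> = \<phi> (inv_into (B (S \<union> T)) (\<beta> (S \<union> T)) (mc X1 X2))"
      using X12 by (simp add: lin_basis_map_bij_betw[where B=B and \<beta>=\<beta> and I="S \<union> T", OF iso(1)[OF U] iso(2)[OF U]])
    also have "\<dots> = \<phi> (mb ?b1 ?b2)"
      using bij_betw_inv_into_left[OF iso(2)[OF U] b12] \<beta>12 by simp
    also have "\<dots> = dual_comult B (lin_mult B mb) S T \<phi> (?b1, ?b2)"
      using iso(1) S T U b1 b2 b12 by (simp add: dual_comult_lin_mult)
    finally show ?thesis using True by simp
  qed
qed

text \<open>In the dual basis, the transpose of a product of basis elements is the coproduct that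
  splits a basis element into its factors.\<close>
lemma comonoid_compat_lin_basis_map:
  fixes \<Phi> :: "nat set \<Rightarrow> ('a \<Rightarrow> 'k::field) \<Rightarrow> ('b \<Rightarrow> 'k)"
  assumes iso: "basis_mult_iso B mb C mc \<beta>"
    and split: "\<And>S T X X1 X2. finite S \<Longrightarrow> finite T \<Longrightarrow> S \<inter> T = {} \<Longrightarrow> X \<in> C (S \<union> T) \<Longrightarrow>
                  dc S T X = Some (X1, X2) \<longleftrightarrow> X1 \<in> C S \<and> X2 \<in> C T \<and> X = mc X1 X2"
    and \<Phi>: "comonoid_compat A dA (dual_comult B (lin_mult B mb)) \<Phi>"
  shows "comonoid_compat A dA (lin_comult C dc) (\<lambda>I f. lin_basis_map B \<beta> I (\<Phi> I f))"
  unfolding comonoid_compat_def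
proof (intro allI impI ballI ext)
  fix S T :: "nat set" and h :: "'a \<Rightarrow> 'k" and p :: "'c \<times> 'c"
  assume STd: "finite S \<and> finite T \<and> S \<inter> T = {}" and h: "h \<in> vecs A (S \<union> T)"
  then have S: "finite S" and T: "finite T" and ST: "S \<inter> T = {}" by auto
  obtain X1 X2 where p: "p = (X1, X2)" by (cases p)
  note iso' = basis_mult_isoD[OF iso]
  let ?b1 = "inv_into (B S) (\<beta> S) X1" and ?b2 = "inv_into (B T) (\<beta> T) X2"
  have "lin_comult C dc S T (lin_basis_map B \<beta> (S \<union> T) (\<Phi> (S \<union> T) h)) (X1, X2)
      = (if X1 \<in> C S \<and> X2 \<in> C T
         then dual_comult B (lin_mult B mb) S T (\<Phi> (S \<union> T) h) (?b1, ?b2) else 0)"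
    by (rule lin_comult_lin_basis_map[where dc=dc, OF iso S T ST split[OF S T ST]])
  also have "\<dots> = (if X1 \<in> C S \<and> X2 \<in> C T
                   then tensor_map A S T (\<Phi> S) (\<Phi> T) (dA S T h) (?b1, ?b2) else 0)"
    using \<Phi> STd h by (simp add: comonoid_compat_def)
  also have "\<dots> = tensor_map A S T (\<lambda>f. lin_basis_map B \<beta> S (\<Phi> S f))
                     (\<lambda>f. lin_basis_map B \<beta> T (\<Phi> T f)) (dA S T h) (X1, X2)"
    by (rule tensor_map_lin_basis_map[symmetric, OF iso'(1)[OF S] iso'(2)[OF S] iso'(1)[OF T] iso'(2)[OF T]])
  finally show "lin_comult C dc S T (lin_basis_map B \<beta> (S \<union> T) (\<Phi> (S \<union> T) h)) p
      = tensor_map A S T (\<lambda>f. lin_basis_map B \<beta> S (\<Phi> S f)) (\<lambda>f. lin_basis_map B \<beta> T (\<Phi> T f))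
          (dA S T h) p"
    unfolding p .
qed

definition kernel_transform :: "'b set \<Rightarrow> ('b \<Rightarrow> 'b \<Rightarrow> 'k::comm_ring_1) \<Rightarrow> ('b \<Rightarrow> 'k) \<Rightarrow> ('b \<Rightarrow> 'k)" where
  "kernel_transform A K f = (\<lambda>c. if c \<in> A then \<Sum>b\<in>A. K b c * f b else 0)"

lemma kernel_transform_linear:
  "kernel_transform A K (\<lambda>b. a * f b + g b) = (\<lambda>c. a * kernel_transform A K f c + kernel_transform A K g c)"
  by (auto simp: kernel_transform_def algebra_simps sum.distrib sum_distrib_left)

lemma kernel_transform_inverse:
  assumes A: "finite A"
    and PQ: "\<And>b c. b \<in> A \<Longrightarrow> c \<in> A \<Longrightarrow> (\<Sum>x\<in>A. P b x * Q x c) = (if b = c then 1 else 0)"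
    and f: "\<And>b. b \<notin> A \<Longrightarrow> f b = 0"
  shows "kernel_transform A Q (kernel_transform A P f) = f"
proof
  fix c
  show "kernel_transform A Q (kernel_transform A P f) c = f c"
  proof (cases "c \<in> A")
    case False
    then show ?thesis by (simp add: kernel_transform_def f)
  next
    case True
    have "kernel_transform A Q (kernel_transform A P f) c = (\<Sum>x\<in>A. \<Sum>b\<in>A. Q x c * (P b x * f b))"
      using True by (simp add: kernel_transform_def sum_distrib_left cong: sum.cong)
    also have "\<dots> = (\<Sum>b\<in>A. f b * (\<Sum>x\<in>A. P b x * Q x c))"
      by (subst sum.swap) (simp add: sum_distrib_left mult_ac)
    also have "\<dots> = f c"
      using A True by (simp add: PQ if_distrib sum.delta cong: if_cong)
    finally show ?thesis .
  qed
qed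

section \<open>Bases of the free commutative monoid S(q)\<close>

lemma sq_basisD:
  assumes "X \<in> sq_basis qs I"
  shows "partition_on I (fst ` X)"
    and "\<And>p p'. p \<in> X \<Longrightarrow> p' \<in> X \<Longrightarrow> fst p = fst p' \<Longrightarrow> p = p'"
    and "\<And>p. p \<in> X \<Longrightarrow> snd p \<in> qs (fst p)"
  using assms by (auto simp: sq_basis_def)

lemma sq_basis_block:
  assumes "X \<in> sq_basis qs I" "p \<in> X"
  shows "fst p \<subseteq> I" "fst p \<noteq> {}"
  using sq_basisD(1)[OF assms(1)] assms(2) by (auto simp: partition_on_def)

lemma sq_basis_block_eq:
  assumes "X \<in> sq_basis qs I" "p \<in> X" "q \<in> X" "x \<in> fst p" "x \<in> fst q"
  shows "p = q"
proof -
  have "fst p = fst q"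
    using sq_basisD(1)[OF assms(1)] assms(2-5) by (auto simp: partition_on_def disjoint_def)
  then show ?thesis using sq_basisD(2)[OF assms(1) assms(2,3)] by simp
qed

lemma sq_basisI:
  assumes "\<Union>(fst ` X) = I"
    and "\<And>p q x. p \<in> X \<Longrightarrow> q \<in> X \<Longrightarrow> x \<in> fst p \<Longrightarrow> x \<in> fst q \<Longrightarrow> p = q"
    and "\<And>p. p \<in> X \<Longrightarrow> fst p \<noteq> {}" "\<And>p. p \<in> X \<Longrightarrow> snd p \<in> qs (fst p)"
  shows "X \<in> sq_basis qs I"
proof -
  have "partition_on I (fst ` X)"
  proof (rule partition_onI)
    show "\<Union>(fst ` X) = I" by (rule assms(1))
    show "{} \<notin> fst ` X" using assms(3) by force
    fix a b assume ab: "a \<in> fst ` X" "b \<in> fst ` X" "a \<noteq> b"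
    then obtain p q where pq: "p \<in> X" "q \<in> X" "a = fst p" "b = fst q" by blast
    show "disjnt a b"
    proof (rule ccontr)
      assume "\<not> disjnt a b"
      then obtain x where "x \<in> a" "x \<in> b" by (auto simp: disjnt_def)
      then have "p = q" using assms(2)[OF pq(1,2)] pq by simp
      then show False using ab(3) pq by simp
    qed
  qed
  moreover have "\<forall>p\<in>X. \<forall>p'\<in>X. fst p = fst p' \<longrightarrow> p = p'"
    using assms(2,3) by (metis all_not_in_conv)
  moreover have "\<forall>(A, x)\<in>X. x \<in> qs A" using assms(4) by auto
  ultimately show ?thesis unfolding sq_basis_def by blast
qed

text \<open>If S is a union of blocks of X, then every block lies in S or in its complement T.\<close>
lemma sq_basis_split:
  assumes ST: "S \<inter> T = {}" and X: "X \<in> sq_basis qs (S \<union> T)"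
    and S_blocks: "S = \<Union> {A\<in>fst ` X. A \<subseteq> S}"
  shows "{p\<in>X. fst p \<subseteq> S} \<in> sq_basis qs S" "{p\<in>X. fst p \<subseteq> T} \<in> sq_basis qs T"
    "X = {p\<in>X. fst p \<subseteq> S} \<union> {p\<in>X. fst p \<subseteq> T}"
proof -
  have ST_cases: "fst p \<subseteq> S \<or> fst p \<subseteq> T" if p: "p \<in> X" for p
  proof (cases "fst p \<inter> S = {}")
    case True then show ?thesis using sq_basis_block(1)[OF X p] by blast
  next
    case False
    then obtain x where x: "x \<in> fst p" "x \<in> S" by blast
    then obtain q where q: "q \<in> X" "fst q \<subseteq> S" "x \<in> fst q" using S_blocks by blast
    have "p = q" by (rule sq_basis_block_eq[OF X p q(1) x(1) q(3)])
    then show ?thesis using q by simp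
  qed
  have cover: "\<Union>(fst ` X) = S \<union> T" using sq_basisD(1)[OF X] by (auto simp: partition_on_def)
  show "{p\<in>X. fst p \<subseteq> S} \<in> sq_basis qs S"
  proof (rule sq_basisI)
    show "\<Union>(fst ` {p\<in>X. fst p \<subseteq> S}) = S" using S_blocks by blast
  qed (use sq_basis_block_eq[OF X] sq_basis_block[OF X] sq_basisD(3)[OF X] in auto)
  show "{p\<in>X. fst p \<subseteq> T} \<in> sq_basis qs T"
  proof (rule sq_basisI)
    show "\<Union>(fst ` {p\<in>X. fst p \<subseteq> T}) = T"
    proof
      show "T \<subseteq> \<Union>(fst ` {p\<in>X. fst p \<subseteq> T})"
      proof
        fix t assume t: "t \<in> T"
        then obtain p where p: "p \<in> X" "t \<in> fst p" using cover by blast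
        have "\<not> fst p \<subseteq> S" using t p(2) ST by blast
        then show "t \<in> \<Union>(fst ` {p\<in>X. fst p \<subseteq> T})" using ST_cases[OF p(1)] p by blast
      qed
    qed blast
  qed (use sq_basis_block_eq[OF X] sq_basis_block[OF X] sq_basisD(3)[OF X] in auto)
  show "X = {p\<in>X. fst p \<subseteq> S} \<union> {p\<in>X. fst p \<subseteq> T}" using ST_cases by blast
qed

lemma sq_basis_Un:
  assumes ST: "S \<inter> T = {}" and X1: "X1 \<in> sq_basis qs S" and X2: "X2 \<in> sq_basis qs T"
  shows "S = \<Union> {A\<in>fst ` (X1 \<union> X2). A \<subseteq> S}" "{p\<in>X1 \<union> X2. fst p \<subseteq> S} = X1"
    "{p\<in>X1 \<union> X2. fst p \<subseteq> T} = X2"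
proof -
  have in_S: "fst p \<subseteq> S" "\<not> fst p \<subseteq> T" if "p \<in> X1" for p
    using sq_basis_block[OF X1 that] ST by blast+
  have in_T: "fst p \<subseteq> T" "\<not> fst p \<subseteq> S" if "p \<in> X2" for p
    using sq_basis_block[OF X2 that] ST by blast+
  have "{A\<in>fst ` (X1 \<union> X2). A \<subseteq> S} = fst ` X1" using in_S in_T by blast
  moreover have "\<Union>(fst ` X1) = S" using sq_basisD(1)[OF X1] by (auto simp: partition_on_def)
  ultimately show "S = \<Union> {A\<in>fst ` (X1 \<union> X2). A \<subseteq> S}" by simp
  show "{p\<in>X1 \<union> X2. fst p \<subseteq> S} = X1" "{p\<in>X1 \<union> X2. fst p \<subseteq> T} = X2"
    using in_S in_T by blast+
qed

definition sq_split :: "nat set \<Rightarrow> nat set \<Rightarrow> (nat set \<times> 'x) set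
    \<Rightarrow> ((nat set \<times> 'x) set \<times> (nat set \<times> 'x) set) option" where
  "sq_split S T X = (if S = \<Union> {A\<in>fst ` X. A \<subseteq> S}
                     then Some ({p\<in>X. fst p \<subseteq> S}, {p\<in>X. fst p \<subseteq> T}) else None)"

lemma sq_comult_eq_lin_comult: "sq_comult qs = lin_comult (sq_basis qs) sq_split"
  unfolding sq_comult_def sq_split_def ..

lemma sq_split_eq_Some_iff:
  assumes ST: "S \<inter> T = {}" and X: "X \<in> sq_basis qs (S \<union> T)"
  shows "sq_split S T X = Some (X1, X2) \<longleftrightarrow>
         X1 \<in> sq_basis qs S \<and> X2 \<in> sq_basis qs T \<and> X = X1 \<union> X2"
proof
  assume "sq_split S T X = Some (X1, X2)"
  then have "S = \<Union> {A\<in>fst ` X. A \<subseteq> S}" "X1 = {p\<in>X. fst p \<subseteq> S}" "X2 = {p\<in>X. fst p \<subseteq> T}"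
    unfolding sq_split_def by (auto split: if_splits)
  then show "X1 \<in> sq_basis qs S \<and> X2 \<in> sq_basis qs T \<and> X = X1 \<union> X2"
    using sq_basis_split[OF ST X] by simp
next
  assume "X1 \<in> sq_basis qs S \<and> X2 \<in> sq_basis qs T \<and> X = X1 \<union> X2"
  then show "sq_split S T X = Some (X1, X2)"
    unfolding sq_split_def using sq_basis_Un[OF ST, of X1 qs X2] by simp
qed

section \<open>Hypergraphs\<close>

definition hyperedges :: "nat set \<Rightarrow> nat set set" where
  "hyperedges I = {U. U \<subseteq> I \<and> 2 \<le> card U}"

lemma hg_eq_Pow_hyperedges: "hg I = Pow (hyperedges I)"
  by (auto simp: hg_def hyperedges_def)

lemma finite_hyperedges: "finite I \<Longrightarrow> finite (hyperedges I)"
  by (rule finite_subset[of _ "Pow I"]) (auto simp: hyperedges_def)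

lemma finite_hg: "finite I \<Longrightarrow> finite (hg I)"
  by (simp add: hg_eq_Pow_hyperedges finite_hyperedges)

lemma hg_edgeD: "E \<in> hg I \<Longrightarrow> U \<in> E \<Longrightarrow> U \<subseteq> I \<and> 2 \<le> card U"
  by (auto simp: hg_def)

lemma hg_edge_nonempty: "E \<in> hg I \<Longrightarrow> U \<in> E \<Longrightarrow> U \<noteq> {}"
  by (auto simp: hg_def)

lemma hg_restrict_in_hg: "E \<in> hg I \<Longrightarrow> hg_restrict E S \<in> hg S"
  by (auto simp: hg_def hg_restrict_def)

lemma hg_Un_in_hg: "E1 \<in> hg S \<Longrightarrow> E2 \<in> hg T \<Longrightarrow> E1 \<union> E2 \<in> hg (S \<union> T)"
  by (auto simp: hg_def)

lemma Int_hg_restrict: "E \<in> hg S \<Longrightarrow> E \<inter> hg_restrict F S = E \<inter> F"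
  by (auto simp: hg_def hg_restrict_def)

lemma hg_restrict_Un_left:
  assumes ST: "S \<inter> T = {}" and E1: "E1 \<in> hg S" and E2: "E2 \<in> hg T" and A: "A \<subseteq> S"
  shows "hg_restrict (E1 \<union> E2) A = hg_restrict E1 A"
proof -
  have "\<not> U \<subseteq> A" if "U \<in> E2" for U
    using hg_edge_nonempty[OF E2 that] hg_edgeD[OF E2 that] A ST by blast
  then show ?thesis by (auto simp: hg_restrict_def)
qed

lemma hg_restrict_Un_right:
  "S \<inter> T = {} \<Longrightarrow> E1 \<in> hg S \<Longrightarrow> E2 \<in> hg T \<Longrightarrow> A \<subseteq> T \<Longrightarrow>
   hg_restrict (E1 \<union> E2) A = hg_restrict E2 A"
  using hg_restrict_Un_left[of T S E2 E1 A] by (simp add: Int_commute Un_commute)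

lemma hg_mult_delta:
  "finite S \<Longrightarrow> finite T \<Longrightarrow> hg_mult S T (delta E1) (delta E2) E
     = (if E1 \<in> hg S \<and> E2 \<in> hg T \<and> E1 \<union> E2 = E then 1 else (0::'k::comm_ring_1))"
  unfolding hg_mult_def by (simp add: lin_mult_delta finite_hg)

lemma hg_comult_delta:
  "finite S \<Longrightarrow> finite T \<Longrightarrow> hg_comult S T (delta E) (E1, E2)
     = (if E \<in> hg (S \<union> T) \<and> hg_restrict E S = E1 \<and> hg_restrict E T = E2
        then 1 else (0::'k::comm_ring_1))"
  unfolding hg_comult_def by (simp add: lin_comult_delta finite_hg)

lemma hg_relabel_id: "hg_relabel id E = E"
  by (simp add: hg_relabel_def)

lemma hg_relabel_comp: "hg_relabel (\<tau> \<circ> \<sigma>) E = hg_relabel \<tau> (hg_relabel \<sigma> E)"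
  by (simp add: hg_relabel_def image_comp image_image)

lemma image_hyperedges:
  assumes \<sigma>: "bij_betw \<sigma> I J"
  shows "image \<sigma> ` hyperedges I = hyperedges J"
proof -
  have Pow: "image \<sigma> ` Pow I = Pow J"
    using bij_betw_image_Pow[OF \<sigma>] by (simp add: bij_betw_def)
  have card: "card (\<sigma> ` U) = card U" if "U \<subseteq> I" for U
    using \<sigma> that by (auto simp: bij_betw_def intro: card_image inj_on_subset)
  show ?thesis
  proof
    show "image \<sigma> ` hyperedges I \<subseteq> hyperedges J"
      using Pow card by (auto simp: hyperedges_def)
    show "hyperedges J \<subseteq> image \<sigma> ` hyperedges I"
    proof
      fix V assume V: "V \<in> hyperedges J"
      then have "V \<in> image \<sigma> ` Pow I" using Pow by (auto simp: hyperedges_def)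
      then obtain U where "U \<subseteq> I" "V = \<sigma> ` U" by auto
      then show "V \<in> image \<sigma> ` hyperedges I" using V card by (auto simp: hyperedges_def)
    qed
  qed
qed

lemma bij_betw_hg_relabel:
  assumes \<sigma>: "bij_betw \<sigma> I J"
  shows "bij_betw (hg_relabel \<sigma>) (hg I) (hg J)"
proof -
  have "hyperedges I \<subseteq> Pow I" by (auto simp: hyperedges_def)
  then have "bij_betw (image \<sigma>) (hyperedges I) (hyperedges J)"
    by (rule bij_betw_subset[OF bij_betw_image_Pow[OF \<sigma>] _ image_hyperedges[OF \<sigma>]])
  then have "bij_betw (image (image \<sigma>)) (Pow (hyperedges I)) (Pow (hyperedges J))"
    by (rule bij_betw_image_Pow)
  moreover have "hg_relabel \<sigma> = image (image \<sigma>)" by (auto simp: hg_relabel_def)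
  ultimately show ?thesis by (simp add: hg_eq_Pow_hyperedges)
qed

lemma hg_relabel_in_hg: "bij_betw \<sigma> I J \<Longrightarrow> E \<in> hg I \<Longrightarrow> hg_relabel \<sigma> E \<in> hg J"
  using bij_betw_hg_relabel by (auto simp: bij_betw_def)

lemma hg_relabel_Int_eq_empty_iff:
  assumes \<sigma>: "bij_betw \<sigma> I J" and E: "E \<in> hg I" and F: "F \<in> hg I"
  shows "hg_relabel \<sigma> E \<inter> hg_relabel \<sigma> F = {} \<longleftrightarrow> E \<inter> F = {}"
proof -
  have "inj_on (image \<sigma>) (Pow I)" using \<sigma> by (simp add: bij_betw_def inj_on_image_Pow)
  moreover have "E \<subseteq> Pow I" "F \<subseteq> Pow I" using E F by (auto simp: hg_def)
  ultimately have "image \<sigma> ` (E \<inter> F) = image \<sigma> ` E \<inter> image \<sigma> ` F"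
    by (rule inj_on_image_Int)
  then show ?thesis by (auto simp: hg_relabel_def)
qed

section \<open>Self-duality\<close>

lemma sum_Pow_neg_one_power_card:
  assumes "finite A"
  shows "(\<Sum>W\<in>Pow A. (-1::'a::ring_1) ^ card W) = (if A = {} then 1 else 0)"
proof (cases "A = {}")
  case False
  then have "card {W. W \<subseteq> A \<and> {} \<subseteq> W \<and> even (card W)} = card {W. W \<subseteq> A \<and> {} \<subseteq> W \<and> odd (card W)}"
    using assms by (intro card_subsupersets_even_odd) auto
  then show ?thesis using assms False by (simp add: Pow_def sum_alternating_cancels)
qed simp

text \<open>The H in the support of the sum are the sets (U - K) \<union> W with W \<subseteq> K - G, so the sum is
  an alternating sum over Pow (K - G).\<close>
lemma sum_Pow_disjoint_cover_sign:
  fixes U G K :: "'a set"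
  assumes U: "finite U" and G: "G \<subseteq> U" and K: "K \<subseteq> U"
  shows "(\<Sum>H\<in>Pow U. (if G \<inter> H = {} then 1 else 0) *
            (if H \<union> K = U then (-1::'k::comm_ring_1) ^ card (H \<inter> K) else 0))
         = (if G = K then 1 else 0)"
proof -
  let ?P = "\<lambda>H. G \<inter> H = {} \<and> H \<union> K = U"
  have "(\<Sum>H\<in>Pow U. (if G \<inter> H = {} then 1 else 0) *
            (if H \<union> K = U then (-1::'k) ^ card (H \<inter> K) else 0))
       = (\<Sum>H\<in>Pow U. if ?P H then (-1::'k) ^ card (H \<inter> K) else 0)"
    by (intro sum.cong) auto
  also have "\<dots> = (\<Sum>H\<in>{H\<in>Pow U. ?P H}. (-1::'k) ^ card (H \<inter> K))"
    using U by (simp only: sum.inter_filter finite_Pow_iff)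
  also have "\<dots> = (if G = K then 1 else 0)"
  proof (cases "G \<subseteq> K")
    case False
    then have none: "{H\<in>Pow U. ?P H} = {}" and "G \<noteq> K" using G by blast+
    then show ?thesis unfolding none by simp
  next
    case True
    have eq: "{H\<in>Pow U. ?P H} = (\<lambda>W. (U - K) \<union> W) ` Pow (K - G)"
    proof
      show "{H\<in>Pow U. ?P H} \<subseteq> (\<lambda>W. (U - K) \<union> W) ` Pow (K - G)"
      proof
        fix H assume "H \<in> {H\<in>Pow U. ?P H}"
        then have "H = (U - K) \<union> (H \<inter> K)" "H \<inter> K \<in> Pow (K - G)" by blast+
        then show "H \<in> (\<lambda>W. (U - K) \<union> W) ` Pow (K - G)" by blast
      qed
      show "(\<lambda>W. (U - K) \<union> W) ` Pow (K - G) \<subseteq> {H\<in>Pow U. ?P H}"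
        using True K by blast
    qed
    have inj: "inj_on (\<lambda>W. (U - K) \<union> W) (Pow (K - G))"
      by (rule inj_onI) blast
    have "(\<Sum>H\<in>{H\<in>Pow U. ?P H}. (-1::'k) ^ card (H \<inter> K))
        = (\<Sum>W\<in>Pow (K - G). (-1::'k) ^ card (((U - K) \<union> W) \<inter> K))"
      unfolding eq using inj by (simp add: sum.reindex)
    also have "\<dots> = (\<Sum>W\<in>Pow (K - G). (-1::'k) ^ card W)"
      by (intro sum.cong refl arg_cong[where f="\<lambda>W. (-1) ^ card W"]) blast
    also have "\<dots> = (if G = K then 1 else 0)"
      using U K True by (subst sum_Pow_neg_one_power_card) (auto intro: finite_subset)
    finally show ?thesis .
  qed
  finally show ?thesis .
qed

definition disjoint_transform :: "nat set \<Rightarrow> (nat set set \<Rightarrow> 'k::comm_ring_1) \<Rightarrow> (nat set set \<Rightarrow> 'k)" where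
  "disjoint_transform I = kernel_transform (hg I) (\<lambda>b c. if b \<inter> c = {} then 1 else 0)"

definition disjoint_transform_inv :: "nat set \<Rightarrow> (nat set set \<Rightarrow> 'k::comm_ring_1) \<Rightarrow> (nat set set \<Rightarrow> 'k)" where
  "disjoint_transform_inv I =
     kernel_transform (hg I) (\<lambda>b c. if b \<union> c = hyperedges I then (-1) ^ card (b \<inter> c) else 0)"

lemma disjoint_transform_apply:
  "disjoint_transform I f c = (if c \<in> hg I then \<Sum>b\<in>hg I. if b \<inter> c = {} then f b else 0 else 0)"
  unfolding disjoint_transform_def kernel_transform_def by (auto intro!: sum.cong)

lemma disjoint_transform_delta:
  assumes "finite I" "b \<in> hg I"
  shows "disjoint_transform I (delta b) c = (if c \<in> hg I \<and> b \<inter> c = {} then 1 else (0::'k::comm_ring_1))"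
proof -
  have "(\<Sum>x\<in>hg I. if x \<inter> c = {} then delta b x else 0)
      = (\<Sum>x\<in>hg I. if x = b then (if b \<inter> c = {} then 1 else (0::'k)) else 0)"
    by (intro sum.cong) (auto simp: delta_def)
  then show ?thesis using assms by (simp add: disjoint_transform_apply finite_hg)
qed

lemma disjoint_transform_inv_left:
  fixes f :: "nat set set \<Rightarrow> 'k::comm_ring_1"
  assumes "finite I" "f \<in> vecs hg I"
  shows "disjoint_transform_inv I (disjoint_transform I f) = f"
  unfolding disjoint_transform_def disjoint_transform_inv_def
proof (rule kernel_transform_inverse)
  show "(\<Sum>x\<in>hg I. (if b \<inter> x = {} then 1 else 0) *
           (if x \<union> c = hyperedges I then (-1::'k) ^ card (x \<inter> c) else 0)) = (if b = c then 1 else 0)"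
    if "b \<in> hg I" "c \<in> hg I" for b c
    using that assms(1) unfolding hg_eq_Pow_hyperedges
    by (intro sum_Pow_disjoint_cover_sign finite_hyperedges) auto
qed (use assms finite_hg vecs_zero in auto)

lemma disjoint_transform_inv_right:
  fixes g :: "nat set set \<Rightarrow> 'k::comm_ring_1"
  assumes "finite I" "g \<in> vecs hg I"
  shows "disjoint_transform I (disjoint_transform_inv I g) = g"
  unfolding disjoint_transform_def disjoint_transform_inv_def
proof (rule kernel_transform_inverse)
  show "(\<Sum>x\<in>hg I. (if b \<union> x = hyperedges I then (-1::'k) ^ card (b \<inter> x) else 0) *
           (if x \<inter> c = {} then 1 else 0)) = (if b = c then 1 else 0)"
    if "b \<in> hg I" "c \<in> hg I" for b c
  proof -
    have "(\<Sum>x\<in>hg I. (if b \<union> x = hyperedges I then (-1::'k) ^ card (b \<inter> x) else 0) *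
             (if x \<inter> c = {} then 1 else 0))
        = (\<Sum>x\<in>Pow (hyperedges I). (if c \<inter> x = {} then 1 else 0) *
             (if x \<union> b = hyperedges I then (-1::'k) ^ card (x \<inter> b) else 0))"
      unfolding hg_eq_Pow_hyperedges by (intro sum.cong refl) (auto simp: Int_commute Un_commute)
    also have "\<dots> = (if b = c then 1 else 0)"
      using that assms(1) unfolding hg_eq_Pow_hyperedges
      by (subst sum_Pow_disjoint_cover_sign) (auto intro: finite_hyperedges)
    finally show ?thesis .
  qed
qed (use assms finite_hg vecs_zero in auto)

lemma disjoint_transform_natural:
  fixes f :: "nat set set \<Rightarrow> 'k::comm_ring_1"
  assumes I: "finite I" and \<sigma>: "bij_betw \<sigma> I J"
  shows "disjoint_transform J (lin_relabel hg hg_relabel \<sigma> I f)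
       = lin_relabel hg hg_relabel \<sigma> I (disjoint_transform I f)"
proof
  fix c
  have J: "finite J" using I \<sigma> bij_betw_finite by blast
  have rl: "bij_betw (hg_relabel \<sigma>) (hg I) (hg J)" by (rule bij_betw_hg_relabel[OF \<sigma>])
  have R: "lin_relabel hg hg_relabel \<sigma> I (disjoint_transform I f) c
      = (if c \<in> hg J then disjoint_transform I f (inv_into (hg I) (hg_relabel \<sigma>) c) else 0)"
    unfolding lin_relabel_def by (rule sum_if_eq_bij_betw[OF finite_hg[OF I] rl])
  show "disjoint_transform J (lin_relabel hg hg_relabel \<sigma> I f) c
      = lin_relabel hg hg_relabel \<sigma> I (disjoint_transform I f) c"
  proof (cases "c \<in> hg J")
    case False
    then show ?thesis using R by (simp add: disjoint_transform_apply)
  next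
    case True
    let ?c = "inv_into (hg I) (hg_relabel \<sigma>) c"
    have c: "?c \<in> hg I" "hg_relabel \<sigma> ?c = c"
      using bij_betwE[OF bij_betw_inv_into[OF rl]] bij_betw_inv_into_right[OF rl] True by auto
    have "disjoint_transform J (lin_relabel hg hg_relabel \<sigma> I f) c
        = (\<Sum>x\<in>hg J. if x \<inter> c = {} then (\<Sum>b\<in>hg I. if hg_relabel \<sigma> b = x then f b else 0) else 0)"
      using True by (simp add: disjoint_transform_apply lin_relabel_def)
    also have "\<dots> = (\<Sum>b\<in>hg I. if hg_relabel \<sigma> b \<inter> c = {} then f b else 0)"
      by (rule sum_if_eq_comp[where \<gamma>="\<lambda>x. x \<inter> c"])
        (use finite_hg I J rl in \<open>auto simp: bij_betw_def\<close>)
    also have "\<dots> = (\<Sum>b\<in>hg I. if b \<inter> ?c = {} then f b else 0)"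
      using hg_relabel_Int_eq_empty_iff[OF \<sigma> _ c(1)] c(2) by (intro sum.cong) auto
    also have "\<dots> = lin_relabel hg hg_relabel \<sigma> I (disjoint_transform I f) c"
      using R True c by (simp add: disjoint_transform_apply)
    finally show ?thesis .
  qed
qed

lemma species_iso_disjoint_transform:
  "species_iso hg hg_relabel hg hg_relabel
     (disjoint_transform :: nat set \<Rightarrow> (nat set set \<Rightarrow> 'k::field) \<Rightarrow> _)"
  unfolding species_iso_def
proof (intro conjI allI impI ballI)
  fix I :: "nat set" assume I: "finite I"
  have vecs: "disjoint_transform I f \<in> vecs hg I" "disjoint_transform_inv I f \<in> vecs hg I"
    for f :: "nat set set \<Rightarrow> 'k"
    unfolding disjoint_transform_def disjoint_transform_inv_def
    by (auto intro!: vecsI simp: kernel_transform_def)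
  show "bij_betw (disjoint_transform I) (vecs hg I) (vecs hg I :: (nat set set \<Rightarrow> 'k) set)"
    by (rule bij_betw_byWitness[where f'="disjoint_transform_inv I"])
      (auto simp: disjoint_transform_inv_left[OF I] disjoint_transform_inv_right[OF I] vecs)
next
  fix I and f g :: "nat set set \<Rightarrow> 'k" and a
  show "disjoint_transform I (\<lambda>b. a * f b + g b)
      = (\<lambda>c. a * disjoint_transform I f c + disjoint_transform I g c)"
    unfolding disjoint_transform_def by (rule kernel_transform_linear)
next
  fix I J :: "nat set" and \<sigma> :: "nat \<Rightarrow> nat" and f :: "nat set set \<Rightarrow> 'k"
  assume "finite I \<and> bij_betw \<sigma> I J"
  then show "disjoint_transform J (lin_relabel hg hg_relabel \<sigma> I f)
           = lin_relabel hg hg_relabel \<sigma> I (disjoint_transform I f)"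
    by (intro disjoint_transform_natural) auto
qed

lemma dual_mult_hg_comult:
  assumes S: "finite S" and T: "finite T"
  shows "dual_mult hg hg_comult S T \<phi> \<psi> c
       = (if c \<in> hg (S \<union> T) then \<phi> (hg_restrict c S) * \<psi> (hg_restrict c T) else (0::'k::comm_ring_1))"
proof -
  have "dual_mult hg hg_comult S T \<phi> \<psi> c
      = (\<Sum>b1\<in>hg S. if b1 = hg_restrict c S then (\<Sum>b2\<in>hg T. if b2 = hg_restrict c T then
           (if c \<in> hg (S \<union> T) then \<phi> b1 * \<psi> b2 else 0) else 0) else 0)"
    unfolding dual_mult_def hg_comult_delta[OF S T] by (intro sum.cong refl) (auto intro!: sum.cong)
  then show ?thesis
    using S T hg_restrict_in_hg by (simp add: sum.delta' finite_hg)
qed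

lemma dual_comult_hg_mult:
  assumes S: "finite S" and T: "finite T"
  shows "dual_comult hg hg_mult S T \<phi> (E1, E2)
       = (if E1 \<in> hg S \<and> E2 \<in> hg T then \<phi> (E1 \<union> E2) else (0::'k::comm_ring_1))"
proof (cases "E1 \<in> hg S \<and> E2 \<in> hg T")
  case True
  then show ?thesis using S T hg_Un_in_hg[of E1 S E2 T]
    by (simp add: dual_comult_def hg_mult_delta finite_hg if_distrib sum.delta' cong: if_cong)
next
  case False
  then show ?thesis by (auto simp: dual_comult_def hg_mult_delta[OF S T] intro!: sum.neutral)
qed

lemma tensor_map_disjoint_transform:
  assumes S: "finite S" and T: "finite T"
  shows "tensor_map hg S T (disjoint_transform S) (disjoint_transform T) F (E1, E2)
       = (if E1 \<in> hg S \<and> E2 \<in> hg T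
          then \<Sum>p\<in>hg S \<times> hg T. if fst p \<inter> E1 = {} \<and> snd p \<inter> E2 = {} then F p else 0
          else (0::'k::comm_ring_1))"
  unfolding tensor_map_def sum.cartesian_product using S T
  by (auto simp: disjoint_transform_delta intro!: sum.cong sum.neutral)

lemma monoid_compat_disjoint_transform:
  "monoid_compat hg hg_mult (dual_mult hg hg_comult)
     (disjoint_transform :: nat set \<Rightarrow> (nat set set \<Rightarrow> 'k::field) \<Rightarrow> _)"
  unfolding monoid_compat_def
proof (intro allI impI ballI ext)
  fix S T :: "nat set" and f g :: "nat set set \<Rightarrow> 'k" and c :: "nat set set"
  assume "finite S \<and> finite T \<and> S \<inter> T = {}"
  then have S: "finite S" and T: "finite T" by auto
  let ?A = "hg S \<times> hg T"
  let ?F = "\<lambda>(b1, b2). f b1 * g b2"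
  let ?m = "\<lambda>(b1, b2). b1 \<union> b2"
  show "disjoint_transform (S \<union> T) (hg_mult S T f g) c
      = dual_mult hg hg_comult S T (disjoint_transform S f) (disjoint_transform T g) c"
  proof (cases "c \<in> hg (S \<union> T)")
    case False
    then show ?thesis by (simp add: dual_mult_hg_comult[OF S T] disjoint_transform_apply)
  next
    case c: True
    have "dual_mult hg hg_comult S T (disjoint_transform S f) (disjoint_transform T g) c
        = (\<Sum>b1\<in>hg S. if b1 \<inter> c = {} then f b1 else 0)
          * (\<Sum>b2\<in>hg T. if b2 \<inter> c = {} then g b2 else 0)"
      using c by (simp add: dual_mult_hg_comult[OF S T] disjoint_transform_apply hg_restrict_in_hg
          Int_hg_restrict cong: sum.cong)
    also have "\<dots> = (\<Sum>p\<in>?A. if ?m p \<inter> c = {} then ?F p else 0)"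
      unfolding sum_product sum.cartesian_product
      by (rule sum.cong) (auto simp: Int_Un_distrib2 split: if_splits)
    also have "\<dots> = (\<Sum>x\<in>hg (S \<union> T). if x \<inter> c = {} then
                       (\<Sum>p\<in>?A. if ?m p = x then ?F p else 0) else 0)"
      by (rule sum_if_eq_comp[symmetric]) (use S T finite_hg in \<open>auto intro: hg_Un_in_hg\<close>)
    also have "\<dots> = disjoint_transform (S \<union> T) (hg_mult S T f g) c"
      unfolding disjoint_transform_apply hg_mult_def lin_mult_def using c
      by (simp, intro sum.cong refl)
        (auto simp: sum.cartesian_product intro!: sum.cong split: prod.splits)
    finally show ?thesis by simp
  qed
qed

lemma comonoid_compat_disjoint_transform:
  "comonoid_compat hg hg_comult (dual_comult hg hg_mult)
     (disjoint_transform :: nat set \<Rightarrow> (nat set set \<Rightarrow> 'k::field) \<Rightarrow> _)"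
  unfolding comonoid_compat_def
proof (intro allI impI ballI ext)
  fix S T :: "nat set" and h :: "nat set set \<Rightarrow> 'k" and p :: "nat set set \<times> nat set set"
  assume "finite S \<and> finite T \<and> S \<inter> T = {}"
  then have S: "finite S" and T: "finite T" by auto
  have U: "finite (S \<union> T)" using S T by simp
  obtain E1 E2 where p: "p = (E1, E2)" by (cases p)
  let ?\<rho> = "\<lambda>b. (hg_restrict b S, hg_restrict b T)"
  let ?\<kappa> = "\<lambda>q. fst q \<inter> E1 = {} \<and> snd q \<inter> E2 = {}"
  have "dual_comult hg hg_mult S T (disjoint_transform (S \<union> T) h) (E1, E2)
      = tensor_map hg S T (disjoint_transform S) (disjoint_transform T) (hg_comult S T h) (E1, E2)"
  proof (cases "E1 \<in> hg S \<and> E2 \<in> hg T")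
    case False
    then show ?thesis by (auto simp: dual_comult_hg_mult[OF S T] tensor_map_disjoint_transform[OF S T])
  next
    case True
    then have E12: "E1 \<union> E2 \<in> hg (S \<union> T)" by (auto intro: hg_Un_in_hg)
    have "b \<inter> (E1 \<union> E2) = {} \<longleftrightarrow> ?\<kappa> (?\<rho> b)" for b
      using True Int_hg_restrict[of E1 S b] Int_hg_restrict[of E2 T b] by (auto simp: Int_commute)
    then have "dual_comult hg hg_mult S T (disjoint_transform (S \<union> T) h) (E1, E2)
        = (\<Sum>b\<in>hg (S \<union> T). if ?\<kappa> (?\<rho> b) then h b else 0)"
      using True E12 by (simp add: dual_comult_hg_mult[OF S T] disjoint_transform_apply)
    also have "\<dots> = (\<Sum>q\<in>hg S \<times> hg T. if ?\<kappa> q then (\<Sum>b\<in>hg (S \<union> T). if ?\<rho> b = q then h b else 0) else 0)"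
      using sum_if_eq_comp[of "hg (S \<union> T)" "hg S \<times> hg T" ?\<rho> ?\<kappa> True h] S T U
      by (simp add: finite_hg hg_restrict_in_hg)
    also have "\<dots> = tensor_map hg S T (disjoint_transform S) (disjoint_transform T) (hg_comult S T h) (E1, E2)"
      unfolding tensor_map_disjoint_transform[OF S T] unfolding hg_comult_def lin_comult_def
      using True by (simp cong: if_cong)
    finally show ?thesis .
  qed
  then show "dual_comult hg hg_mult S T (disjoint_transform (S \<union> T) h) p
      = tensor_map hg S T (disjoint_transform S) (disjoint_transform T) (hg_comult S T h) p"
    unfolding p .
qed

lemma hg_self_dual: "hg_self_dual TYPE('k::field)"
  unfolding hg_self_dual_def
  using species_iso_disjoint_transform monoid_compat_disjoint_transform
    comonoid_compat_disjoint_transform by blast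

section \<open>Connected components\<close>

definition hg_adjacent :: "nat set set \<Rightarrow> (nat \<times> nat) set" where
  "hg_adjacent E = {(x, y). \<exists>U\<in>E. x \<in> U \<and> y \<in> U}"

definition hg_connected :: "nat set \<Rightarrow> nat set set \<Rightarrow> bool" where
  "hg_connected A E \<longleftrightarrow> A \<noteq> {} \<and> (\<forall>x\<in>A. \<forall>y\<in>A. (x, y) \<in> (hg_adjacent E)\<^sup>*)"

definition hg_reach :: "nat set \<Rightarrow> nat set set \<Rightarrow> (nat \<times> nat) set" where
  "hg_reach I E = {(x, y). x \<in> I \<and> y \<in> I \<and> (x, y) \<in> (hg_adjacent E)\<^sup>*}"

definition hg_components :: "nat set \<Rightarrow> nat set set \<Rightarrow> nat set set" where
  "hg_components I E = I // hg_reach I E"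

lemma hg_adjacent_rtrancl_sym: "(x, y) \<in> (hg_adjacent E)\<^sup>* \<Longrightarrow> (y, x) \<in> (hg_adjacent E)\<^sup>*"
proof -
  have "sym (hg_adjacent E)" by (auto simp: hg_adjacent_def sym_def)
  then have "sym ((hg_adjacent E)\<^sup>*)" by (rule sym_rtrancl)
  then show "(x, y) \<in> (hg_adjacent E)\<^sup>* \<Longrightarrow> (y, x) \<in> (hg_adjacent E)\<^sup>*" by (rule symD)
qed

lemma hg_adjacent_rtrancl_mono: "E \<subseteq> E' \<Longrightarrow> (hg_adjacent E)\<^sup>* \<subseteq> (hg_adjacent E')\<^sup>*"
  by (rule rtrancl_mono) (auto simp: hg_adjacent_def)

lemma equiv_hg_reach: "equiv I (hg_reach I E)"
  by (rule equivI)
    (auto simp: hg_reach_def refl_on_def sym_def trans_def intro: hg_adjacent_rtrancl_sym rtrancl_trans)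

lemma partition_on_hg_components: "partition_on I (hg_components I E)"
  unfolding hg_components_def by (rule partition_on_quotient[OF equiv_hg_reach])

lemma hg_components_subset: "A \<in> hg_components I E \<Longrightarrow> A \<subseteq> I"
  using partition_on_hg_components[of I E] by (auto simp: partition_on_def)

lemma hg_components_nonempty: "A \<in> hg_components I E \<Longrightarrow> A \<noteq> {}"
  using partition_on_hg_components[of I E] by (auto simp: partition_on_def)

lemma hg_components_eqI:
  assumes P: "partition_on I P" and E: "E \<in> hg I"
    and cover: "\<And>U. U \<in> E \<Longrightarrow> \<exists>A\<in>P. U \<subseteq> A"
    and connected: "\<And>A. A \<in> P \<Longrightarrow> hg_connected A (hg_restrict E A)"
  shows "hg_components I E = P"
proof -
  let ?R = "{(x, y). \<exists>A\<in>P. x \<in> A \<and> y \<in> A}"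
  have eqv: "equiv I ?R" by (rule equiv_partition_on[OF P])
  have "hg_reach I E = ?R"
  proof
    show "hg_reach I E \<subseteq> ?R"
    proof
      fix p assume "p \<in> hg_reach I E"
      then obtain x y where p: "p = (x, y)" "x \<in> I" and path: "(x, y) \<in> (hg_adjacent E)\<^sup>*"
        by (auto simp: hg_reach_def)
      have "(x, z) \<in> ?R" if "(x, z) \<in> (hg_adjacent E)\<^sup>*" for z
        using that
      proof (induction rule: rtrancl_induct)
        case base
        then show ?case using eqv \<open>x \<in> I\<close> by (auto simp: equiv_def refl_on_def)
      next
        case (step y z)
        then obtain U where U: "U \<in> E" "y \<in> U" "z \<in> U" by (auto simp: hg_adjacent_def)
        then have "(y, z) \<in> ?R" using cover[OF U(1)] by blast
        then show ?case using step.IH eqv by (meson equiv_def transE)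
      qed
      then show "p \<in> ?R" using p path by simp
    qed
    show "?R \<subseteq> hg_reach I E"
    proof
      fix p assume "p \<in> ?R"
      then obtain x y A where p: "p = (x, y)" "A \<in> P" "x \<in> A" "y \<in> A" by blast
      have "A \<subseteq> I" using P p(2) by (auto simp: partition_on_def)
      moreover have "(x, y) \<in> (hg_adjacent (hg_restrict E A))\<^sup>*"
        using connected[OF p(2)] p by (auto simp: hg_connected_def)
      moreover have "(hg_adjacent (hg_restrict E A))\<^sup>* \<subseteq> (hg_adjacent E)\<^sup>*"
        by (rule hg_adjacent_rtrancl_mono) (auto simp: hg_restrict_def)
      ultimately show "p \<in> hg_reach I E" using p by (auto simp: hg_reach_def)
    qed
  qed
  then show ?thesis unfolding hg_components_def using partition_on_eq_quotient[OF P] by simp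
qed

lemma hg_connected_component:
  assumes E: "E \<in> hg I" and A: "A \<in> hg_components I E"
  shows "hg_connected A (hg_restrict E A)"
proof -
  obtain x0 where x0: "x0 \<in> I" "A = hg_reach I E `` {x0}"
    using A by (auto simp: hg_components_def quotient_def)
  have A_iff: "w \<in> A \<longleftrightarrow> w \<in> I \<and> (x0, w) \<in> (hg_adjacent E)\<^sup>*" for w
    using x0 by (auto simp: hg_reach_def)
  have path_inside: "(x0, z) \<in> (hg_adjacent (hg_restrict E A))\<^sup>*"
    if "(x0, z) \<in> (hg_adjacent E)\<^sup>*" for z
    using that
  proof (induction rule: rtrancl_induct)
    case base then show ?case by simp
  next
    case (step y z)
    then obtain U where U: "U \<in> E" "y \<in> U" "z \<in> U" by (auto simp: hg_adjacent_def)
    have "U \<subseteq> A"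
    proof
      fix w assume "w \<in> U"
      then have "(y, w) \<in> hg_adjacent E" using U by (auto simp: hg_adjacent_def)
      then have "(x0, w) \<in> (hg_adjacent E)\<^sup>*" using step.hyps(1) by simp
      moreover have "w \<in> I" using hg_edgeD[OF E U(1)] \<open>w \<in> U\<close> by auto
      ultimately show "w \<in> A" using A_iff by simp
    qed
    then have "(y, z) \<in> hg_adjacent (hg_restrict E A)"
      using U by (auto simp: hg_adjacent_def hg_restrict_def)
    then show ?case using step.IH by simp
  qed
  show ?thesis unfolding hg_connected_def
  proof (intro conjI ballI)
    show "A \<noteq> {}" using x0 by (auto simp: hg_reach_def)
    fix x y assume "x \<in> A" "y \<in> A"
    then have "(x0, x) \<in> (hg_adjacent (hg_restrict E A))\<^sup>*" "(x0, y) \<in> (hg_adjacent (hg_restrict E A))\<^sup>*"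
      using path_inside A_iff by auto
    then show "(x, y) \<in> (hg_adjacent (hg_restrict E A))\<^sup>*"
      by (meson rtrancl_trans hg_adjacent_rtrancl_sym)
  qed
qed

lemma hg_components_cover:
  assumes E: "E \<in> hg I" and U: "U \<in> E"
  shows "\<exists>A\<in>hg_components I E. U \<subseteq> A"
proof -
  obtain u where u: "u \<in> U" using hg_edge_nonempty[OF E U] by blast
  have uI: "u \<in> I" using hg_edgeD[OF E U] u by auto
  have "U \<subseteq> hg_reach I E `` {u}"
    using hg_edgeD[OF E U] U u uI by (auto simp: hg_reach_def hg_adjacent_def)
  moreover have "hg_reach I E `` {u} \<in> hg_components I E"
    using uI by (auto simp: hg_components_def quotient_def)
  ultimately show ?thesis by blast
qed

lemma Union_hg_restrict_components:
  "E \<in> hg I \<Longrightarrow> (\<Union>A\<in>hg_components I E. hg_restrict E A) = E"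
  using hg_components_cover by (auto simp: hg_restrict_def)

lemma hg_connected_relabel:
  assumes "hg_connected A E"
  shows "hg_connected (\<sigma> ` A) (hg_relabel \<sigma> E)"
proof -
  have "(\<sigma> x, \<sigma> y) \<in> (hg_adjacent (hg_relabel \<sigma> E))\<^sup>*" if "(x, y) \<in> (hg_adjacent E)\<^sup>*" for x y
    using that
  proof (induction rule: rtrancl_induct)
    case (step y z)
    then have "(\<sigma> y, \<sigma> z) \<in> hg_adjacent (hg_relabel \<sigma> E)"
      unfolding hg_adjacent_def hg_relabel_def by blast
    then show ?case using step.IH by simp
  qed simp
  then show ?thesis using assms unfolding hg_connected_def by blast
qed

lemma hg_restrict_relabel:
  assumes inj: "inj_on \<sigma> I" and E: "E \<in> hg I" and A: "A \<subseteq> I"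
  shows "hg_restrict (hg_relabel \<sigma> E) (\<sigma> ` A) = hg_relabel \<sigma> (hg_restrict E A)"
proof -
  have "\<sigma> ` U \<subseteq> \<sigma> ` A \<longleftrightarrow> U \<subseteq> A" if "U \<in> E" for U
    using hg_edgeD[OF E that] inj_on_image_mem_iff[OF inj _ A] by blast
  then show ?thesis unfolding hg_restrict_def hg_relabel_def by auto
qed

lemma hg_components_relabel:
  assumes \<sigma>: "bij_betw \<sigma> I J" and E: "E \<in> hg I"
  shows "hg_components J (hg_relabel \<sigma> E) = image \<sigma> ` hg_components I E"
proof (rule hg_components_eqI)
  have inj: "inj_on \<sigma> I" and J: "\<sigma> ` I = J" using \<sigma> by (auto simp: bij_betw_def)
  have "partition_on (\<sigma> ` I) (image \<sigma> ` hg_components I E - {{}})"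
    by (rule partition_on_inj_image[OF partition_on_hg_components inj])
  moreover have "image \<sigma> ` hg_components I E - {{}} = image \<sigma> ` hg_components I E"
    using hg_components_nonempty by auto
  ultimately show "partition_on J (image \<sigma> ` hg_components I E)" using J by simp
  show "hg_relabel \<sigma> E \<in> hg J" by (rule hg_relabel_in_hg[OF \<sigma> E])
  fix V assume "V \<in> hg_relabel \<sigma> E"
  then obtain U where U: "U \<in> E" "V = \<sigma> ` U" by (auto simp: hg_relabel_def)
  then show "\<exists>B\<in>image \<sigma> ` hg_components I E. V \<subseteq> B"
    using hg_components_cover[OF E U(1)] by blast
next
  have inj: "inj_on \<sigma> I" using \<sigma> by (auto simp: bij_betw_def)
  fix B assume "B \<in> image \<sigma> ` hg_components I E"
  then obtain A where A: "A \<in> hg_components I E" "B = \<sigma> ` A" by blast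
  then have "hg_restrict (hg_relabel \<sigma> E) B = hg_relabel \<sigma> (hg_restrict E A)"
    using hg_restrict_relabel[OF inj E hg_components_subset[OF A(1)]] by simp
  then show "hg_connected B (hg_restrict (hg_relabel \<sigma> E) B)"
    using hg_connected_relabel[OF hg_connected_component[OF E A(1)]] A(2) by simp
qed

lemma partition_on_Un:
  "partition_on S P \<Longrightarrow> partition_on T Q \<Longrightarrow> S \<inter> T = {} \<Longrightarrow> partition_on (S \<union> T) (P \<union> Q)"
  by (auto simp: partition_on_def intro!: disjoint_union)

lemma hg_components_Un:
  assumes ST: "S \<inter> T = {}" and E1: "E1 \<in> hg S" and E2: "E2 \<in> hg T"
  shows "hg_components (S \<union> T) (E1 \<union> E2) = hg_components S E1 \<union> hg_components T E2"
proof (rule hg_components_eqI)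
  show "partition_on (S \<union> T) (hg_components S E1 \<union> hg_components T E2)"
    by (rule partition_on_Un[OF partition_on_hg_components partition_on_hg_components ST])
  show "E1 \<union> E2 \<in> hg (S \<union> T)" by (rule hg_Un_in_hg[OF E1 E2])
  fix U assume "U \<in> E1 \<union> E2"
  then show "\<exists>A\<in>hg_components S E1 \<union> hg_components T E2. U \<subseteq> A"
    using hg_components_cover[OF E1] hg_components_cover[OF E2] by blast
next
  fix A assume "A \<in> hg_components S E1 \<union> hg_components T E2"
  then show "hg_connected A (hg_restrict (E1 \<union> E2) A)"
    using hg_restrict_Un_left[OF ST E1 E2] hg_restrict_Un_right[OF ST E1 E2]
      hg_components_subset hg_connected_component[OF E1] hg_connected_component[OF E2]
    by auto
qed

section \<open>Decomposition into connected components\<close>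

text \<open>The set species q in S(q) must take values in a fixed type, so a connected hypergraph
  on A is stored as a natural number via an injective encoding of finite edge sets.\<close>
definition hg_encode :: "nat set set \<Rightarrow> nat" where
  "hg_encode E = set_encode (set_encode ` E)"

definition hg_decode :: "nat \<Rightarrow> nat set set" where
  "hg_decode n = set_decode ` set_decode n"

lemma hg_decode_encode:
  assumes I: "finite I" and E: "E \<in> hg I"
  shows "hg_decode (hg_encode E) = E"
proof -
  have "finite E" using E finite_hg[OF I] by (auto simp: hg_eq_Pow_hyperedges intro: finite_subset)
  moreover have "finite U" if "U \<in> E" for U
    using hg_edgeD[OF E that] I by (auto intro: finite_subset)
  ultimately show ?thesis
    unfolding hg_decode_def hg_encode_def by (simp add: image_image)
qed

definition conn_hg :: "nat set \<Rightarrow> nat set" where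
  "conn_hg A = hg_encode ` {E\<in>hg A. hg_connected A E}"

definition conn_hg_relabel :: "(nat \<Rightarrow> nat) \<Rightarrow> nat set \<Rightarrow> nat \<Rightarrow> nat" where
  "conn_hg_relabel \<sigma> A x = hg_encode (hg_relabel \<sigma> (hg_decode x))"

lemma conn_hg_empty: "conn_hg {} = {}"
  by (auto simp: conn_hg_def hg_connected_def)

lemma conn_hg_relabel_encode:
  "finite A \<Longrightarrow> E \<in> hg A \<Longrightarrow> conn_hg_relabel \<sigma> A (hg_encode E) = hg_encode (hg_relabel \<sigma> E)"
  by (simp add: conn_hg_relabel_def hg_decode_encode)

lemma set_species_conn_hg: "set_species conn_hg conn_hg_relabel"
  unfolding set_species_def
proof (intro conjI allI impI ballI)
  fix A B :: "nat set" and \<sigma> :: "nat \<Rightarrow> nat"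
  assume "finite A \<and> bij_betw \<sigma> A B"
  then have A: "finite A" and \<sigma>: "bij_betw \<sigma> A B" by auto
  show "conn_hg_relabel \<sigma> A ` conn_hg A \<subseteq> conn_hg B"
  proof
    fix y assume "y \<in> conn_hg_relabel \<sigma> A ` conn_hg A"
    then obtain E where E: "E \<in> hg A" "hg_connected A E" "y = conn_hg_relabel \<sigma> A (hg_encode E)"
      by (auto simp: conn_hg_def)
    have "hg_connected B (hg_relabel \<sigma> E)"
      using hg_connected_relabel[OF E(2), of \<sigma>] \<sigma> by (simp add: bij_betw_def)
    then show "y \<in> conn_hg B"
      using E conn_hg_relabel_encode[OF A E(1)] hg_relabel_in_hg[OF \<sigma> E(1)] by (auto simp: conn_hg_def)
  qed
next
  fix A :: "nat set" and x assume A: "finite A" and "x \<in> conn_hg A"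
  then obtain E where E: "E \<in> hg A" "x = hg_encode E" by (auto simp: conn_hg_def)
  then show "conn_hg_relabel id A x = x"
    using conn_hg_relabel_encode[OF A E(1)] by (simp add: hg_relabel_id)
next
  fix A B C :: "nat set" and \<sigma> \<tau> :: "nat \<Rightarrow> nat" and x
  assume "finite A \<and> bij_betw \<sigma> A B \<and> bij_betw \<tau> B C" and x: "x \<in> conn_hg A"
  then have A: "finite A" and \<sigma>: "bij_betw \<sigma> A B" by auto
  have B: "finite B" using A \<sigma> bij_betw_finite by blast
  obtain E where E: "E \<in> hg A" "x = hg_encode E" using x by (auto simp: conn_hg_def)
  show "conn_hg_relabel (\<tau> \<circ> \<sigma>) A x = conn_hg_relabel \<tau> B (conn_hg_relabel \<sigma> A x)"
    using E conn_hg_relabel_encode[OF A E(1)] conn_hg_relabel_encode[OF B hg_relabel_in_hg[OF \<sigma> E(1)]]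
    by (simp add: hg_relabel_comp)
next
  fix A :: "nat set" and \<sigma> \<tau> :: "nat \<Rightarrow> nat" and x
  assume h: "finite A \<and> inj_on \<sigma> A \<and> (\<forall>a\<in>A. \<sigma> a = \<tau> a)" and "x \<in> conn_hg A"
  then obtain E where E: "E \<in> hg A" "x = hg_encode E" by (auto simp: conn_hg_def)
  have "\<sigma> ` U = \<tau> ` U" if "U \<in> E" for U
    using hg_edgeD[OF E(1) that] h by (intro image_cong) auto
  then have "hg_relabel \<sigma> E = hg_relabel \<tau> E"
    unfolding hg_relabel_def by (rule image_cong[OF refl])
  then show "conn_hg_relabel \<sigma> A x = conn_hg_relabel \<tau> A x"
    using E conn_hg_relabel_encode[of A E] h by simp
qed

definition hg_assembly :: "nat set \<Rightarrow> nat set set \<Rightarrow> (nat set \<times> nat) set" where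
  "hg_assembly I E = (\<lambda>A. (A, hg_encode (hg_restrict E A))) ` hg_components I E"

lemma hg_assembly_in_sq_basis:
  assumes "E \<in> hg I"
  shows "hg_assembly I E \<in> sq_basis conn_hg I"
proof -
  have "fst ` hg_assembly I E = hg_components I E" by (simp add: hg_assembly_def image_image)
  moreover have "hg_encode (hg_restrict E A) \<in> conn_hg A" if "A \<in> hg_components I E" for A
    using hg_restrict_in_hg[OF assms] hg_connected_component[OF assms that] by (auto simp: conn_hg_def)
  ultimately show ?thesis
    unfolding sq_basis_def using partition_on_hg_components by (auto simp: hg_assembly_def)
qed

definition hg_glue :: "(nat set \<times> nat) set \<Rightarrow> nat set set" where
  "hg_glue X = (\<Union>p\<in>X. hg_decode (snd p))"

lemma hg_glue_hg_assembly:
  assumes I: "finite I" and E: "E \<in> hg I"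
  shows "hg_glue (hg_assembly I E) = E"
proof -
  have "hg_decode (hg_encode (hg_restrict E A)) = hg_restrict E A" if "A \<in> hg_components I E" for A
    using hg_components_subset[OF that] I
    by (intro hg_decode_encode[OF _ hg_restrict_in_hg[OF E]]) (rule finite_subset)
  then show ?thesis
    using Union_hg_restrict_components[OF E] by (simp add: hg_glue_def hg_assembly_def)
qed

lemma sq_basis_conn_hg_decode:
  assumes I: "finite I" and X: "X \<in> sq_basis conn_hg I" and p: "p \<in> X"
  shows "hg_decode (snd p) \<in> hg (fst p)" "hg_connected (fst p) (hg_decode (snd p))"
    "hg_encode (hg_decode (snd p)) = snd p"
proof -
  obtain F where F: "F \<in> hg (fst p)" "hg_connected (fst p) F" "snd p = hg_encode F"
    using sq_basisD(3)[OF X p] by (auto simp: conn_hg_def)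
  have "finite (fst p)" using sq_basis_block(1)[OF X p] I by (rule finite_subset)
  then show "hg_decode (snd p) \<in> hg (fst p)" "hg_connected (fst p) (hg_decode (snd p))"
    "hg_encode (hg_decode (snd p)) = snd p"
    using F by (simp_all add: hg_decode_encode)
qed

lemma hg_glue_in_hg:
  assumes "finite I" "X \<in> sq_basis conn_hg I"
  shows "hg_glue X \<in> hg I"
  unfolding hg_def hg_glue_def
proof clarify
  fix U p assume p: "p \<in> X" and U: "U \<in> hg_decode (snd p)"
  then have "U \<subseteq> fst p \<and> 2 \<le> card U" using sq_basis_conn_hg_decode(1)[OF assms p] hg_edgeD by blast
  then show "U \<subseteq> I \<and> 2 \<le> card U" using sq_basis_block(1)[OF assms(2) p] by auto
qed

lemma hg_restrict_hg_glue:
  assumes I: "finite I" and X: "X \<in> sq_basis conn_hg I" and p: "p \<in> X"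
  shows "hg_restrict (hg_glue X) (fst p) = hg_decode (snd p)"
proof
  show "hg_decode (snd p) \<subseteq> hg_restrict (hg_glue X) (fst p)"
    using sq_basis_conn_hg_decode(1)[OF I X p] p hg_edgeD by (fastforce simp: hg_restrict_def hg_glue_def)
  show "hg_restrict (hg_glue X) (fst p) \<subseteq> hg_decode (snd p)"
  proof
    fix U assume "U \<in> hg_restrict (hg_glue X) (fst p)"
    then obtain q where q: "q \<in> X" "U \<in> hg_decode (snd q)" "U \<subseteq> fst p"
      by (auto simp: hg_restrict_def hg_glue_def)
    have "U \<subseteq> fst q" "U \<noteq> {}"
      using sq_basis_conn_hg_decode(1)[OF I X q(1)] q(2) hg_edgeD hg_edge_nonempty by blast+
    then obtain x where "x \<in> fst p" "x \<in> fst q" using q(3) by blast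
    then have "q = p" using sq_basis_block_eq[OF X q(1) p] by simp
    then show "U \<in> hg_decode (snd p)" using q by simp
  qed
qed

lemma hg_components_hg_glue:
  assumes I: "finite I" and X: "X \<in> sq_basis conn_hg I"
  shows "hg_components I (hg_glue X) = fst ` X"
proof (rule hg_components_eqI[OF sq_basisD(1)[OF X] hg_glue_in_hg[OF I X]])
  fix U assume "U \<in> hg_glue X"
  then obtain p where p: "p \<in> X" "U \<in> hg_decode (snd p)" by (auto simp: hg_glue_def)
  then have "U \<subseteq> fst p" using sq_basis_conn_hg_decode(1)[OF I X p(1)] hg_edgeD by blast
  then show "\<exists>A\<in>fst ` X. U \<subseteq> A" using p(1) by blast
next
  fix A assume "A \<in> fst ` X"
  then obtain p where "p \<in> X" "A = fst p" by blast
  then show "hg_connected A (hg_restrict (hg_glue X) A)"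
    using hg_restrict_hg_glue[OF I X] sq_basis_conn_hg_decode(2)[OF I X] by simp
qed

lemma hg_assembly_hg_glue:
  assumes I: "finite I" and X: "X \<in> sq_basis conn_hg I"
  shows "hg_assembly I (hg_glue X) = X"
proof -
  have "(fst p, hg_encode (hg_restrict (hg_glue X) (fst p))) = p" if "p \<in> X" for p
    using hg_restrict_hg_glue[OF I X that] sq_basis_conn_hg_decode(3)[OF I X that] by simp
  then show ?thesis
    unfolding hg_assembly_def hg_components_hg_glue[OF I X] by (simp add: image_image cong: image_cong)
qed

lemma bij_betw_hg_assembly:
  assumes I: "finite I"
  shows "bij_betw (hg_assembly I) (hg I) (sq_basis conn_hg I)"
  by (rule bij_betw_byWitness[where f'=hg_glue])
    (auto simp: hg_glue_hg_assembly[OF I] hg_assembly_hg_glue[OF I]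
      intro: hg_assembly_in_sq_basis hg_glue_in_hg[OF I])

lemma hg_assembly_Un:
  assumes ST: "S \<inter> T = {}" and E1: "E1 \<in> hg S" and E2: "E2 \<in> hg T"
  shows "hg_assembly (S \<union> T) (E1 \<union> E2) = hg_assembly S E1 \<union> hg_assembly T E2"
proof -
  have "hg_restrict (E1 \<union> E2) A = hg_restrict E1 A" if "A \<in> hg_components S E1" for A
    using hg_restrict_Un_left[OF ST E1 E2 hg_components_subset[OF that]] .
  moreover have "hg_restrict (E1 \<union> E2) A = hg_restrict E2 A" if "A \<in> hg_components T E2" for A
    using hg_restrict_Un_right[OF ST E1 E2 hg_components_subset[OF that]] .
  ultimately show ?thesis
    unfolding hg_assembly_def hg_components_Un[OF ST E1 E2] image_Un
    by (simp cong: image_cong)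
qed

lemma hg_assembly_relabel:
  assumes I: "finite I" and \<sigma>: "bij_betw \<sigma> I J" and E: "E \<in> hg I"
  shows "hg_assembly J (hg_relabel \<sigma> E) = sq_relabel conn_hg_relabel \<sigma> (hg_assembly I E)"
proof -
  have inj: "inj_on \<sigma> I" using \<sigma> by (simp add: bij_betw_def)
  have "hg_encode (hg_restrict (hg_relabel \<sigma> E) (\<sigma> ` A))
      = conn_hg_relabel \<sigma> A (hg_encode (hg_restrict E A))"
    if A: "A \<in> hg_components I E" for A
  proof -
    have "finite A" using hg_components_subset[OF A] I by (rule finite_subset)
    then show ?thesis
      using conn_hg_relabel_encode[OF _ hg_restrict_in_hg[OF E]]
        hg_restrict_relabel[OF inj E hg_components_subset[OF A]] by simp
  qed
  then show ?thesis
    unfolding hg_assembly_def sq_relabel_def hg_components_relabel[OF \<sigma> E]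
    by (simp add: image_image cong: image_cong)
qed

lemma basis_mult_iso_hg_assembly: "basis_mult_iso hg (\<union>) (sq_basis conn_hg) (\<union>) hg_assembly"
  unfolding basis_mult_iso_def
  by (intro conjI allI impI ballI) (simp_all add: finite_hg bij_betw_hg_assembly hg_Un_in_hg hg_assembly_Un)

lemma species_iso_hg_assembly:
  "species_iso hg hg_relabel (sq_basis conn_hg) (sq_relabel conn_hg_relabel)
     (lin_basis_map hg hg_assembly :: _ \<Rightarrow> (_ \<Rightarrow> 'k::field) \<Rightarrow> _)"
proof (rule species_iso_lin_basis_map)
  show "hg_assembly J (hg_relabel \<sigma> E) = sq_relabel conn_hg_relabel \<sigma> (hg_assembly I E)"
    if "finite I" "bij_betw \<sigma> I J" "E \<in> hg I" for I J \<sigma> E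
    using that by (rule hg_assembly_relabel)
qed (simp_all add: finite_hg bij_betw_hg_assembly hg_relabel_in_hg)

lemma hg_free_commutative: "hg_free_commutative TYPE('k::field)"
  unfolding hg_free_commutative_def
  using set_species_conn_hg conn_hg_empty species_iso_hg_assembly
    monoid_compat_lin_basis_map[OF basis_mult_iso_hg_assembly]
  by (auto simp: hg_mult_def sq_mult_def)

lemma hg_free_cocommutative: "hg_free_cocommutative TYPE('k::field)"
proof -
  have "species_iso hg hg_relabel (sq_basis conn_hg) (sq_relabel conn_hg_relabel)
      (\<lambda>I f. lin_basis_map hg hg_assembly I (disjoint_transform I f) :: _ \<Rightarrow> 'k)"
    by (rule species_iso_comp[OF species_iso_disjoint_transform species_iso_hg_assembly])
  moreover have "comonoid_compat hg hg_comult (sq_comult conn_hg)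
      (\<lambda>I f. lin_basis_map hg hg_assembly I (disjoint_transform I f) :: _ \<Rightarrow> 'k)"
    unfolding sq_comult_eq_lin_comult
    by (rule comonoid_compat_lin_basis_map[OF basis_mult_iso_hg_assembly sq_split_eq_Some_iff])
      (auto simp: comonoid_compat_disjoint_transform[unfolded hg_mult_def])
  ultimately show ?thesis
    unfolding hg_free_cocommutative_def using set_species_conn_hg conn_hg_empty by blast
qed

theorem mainTheorem15:
  shows "hg_free_commutative TYPE('k::field_char_0) \<and>
         hg_free_cocommutative TYPE('k::field_char_0) \<and>
         hg_self_dual TYPE('k::field_char_0)"
  using hg_free_commutative hg_free_cocommutative hg_self_dual by blast

end
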